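(* Let $X$ be a topologically complete space and $\mathcal A$ a family of closed, locally finite, normal covers of $X$ satisfying conditions (I) and (II), and let $N_\infty=F_\infty$, $\pi:N_\infty\to X$ and $p:X\to N_\infty$ be as in the context. Then: (1) $\pi$ is a perfect map (continuous, closed, with compact fibers $\pi^{-1}(x)$); (2a) $\pi\circ p=\mathrm{id}_X$; (2b) there exists a homotopy $H:N_\infty\times[0,1]\to N_\infty$ with $H_0=\mathrm{id}_{N_\infty}$, $H_1=p\circ\pi$ and $\pi\circ H=\pi\circ\mathrm{proj}$, where $\mathrm{proj}:N_\infty\times[0,1]\to N_\infty$ is the projection. In particular each fiber of $\pi$ is contractible.
   Context: A topologically complete space is a Tychonoff space complete with respect to its finest uniformity. A closed, locally finite, normal cover $\alpha$ of $X$ is a locally finite cover by closed sets admitting a partition of unity $\{\phi_{\alpha,V}:V\in\alpha\}$ with $\mathrm{cl}(\phi_{\alpha,V}^{-1}((0,1]))\subset\mathrm{int}(V)$, $\sum_V\phi_{\alpha,V}=1$; fix such a partition of unity for each $\alpha\in\mathcal A$. $\mathrm{star}_\alpha(x)=\{V\in\alpha:x\in V\}$. Conditions: (I) for each open $U\subset X$ and $x\in U$ there is $\alpha\in\mathcal A$ with $\bigcup\mathrm{star}_\alpha(x)\subset U$; (II) if $f(\alpha)\in\alpha$ is chosen for each $\alpha\in\mathcal A$ and $\{f(\alpha)\}$ has the finite intersection property, then $\bigcap_\alpha f(\alpha)\neq\emptyset$. Construction: $\Lambda$ is the set of finite subsets of $\mathcal A$ directed by inclusion. For $\lambda\in\Lambda$,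 $N^{(0)}_\lambda$ is the set of functions $v$ on $\lambda$ with $v(\alpha)\in\alpha$ for all $\alpha\in\lambda$ and $\wedge v:=\bigcap_{\alpha\in\lambda}v(\alpha)\neq\emptyset$ (empty intersection meaning $X$). $F_\lambda$ is the simplicial complex (weak topology) with vertex set $N^{(0)}_\lambda$ in which $\{v_1,\dots,v_k\}$ spans a simplex iff $\wedge v_i\cap\wedge v_j\neq\emptyset$ for all $i,j$; $N_\lambda$ is its subcomplex with the same vertices in which $\{v_1,\dots,v_k\}$ spans a simplex iff $\bigcap_i\wedge v_i\neq\emptyset$. For $\lambda\subset\mu$, $\pi^\mu_\lambda$ is the simplicial map sending a vertex $v$ to $v|_\lambda$. $F_\infty=\varprojlim F_\lambda$ and $N_\infty=\varprojlim N_\lambda$ (they coincide), with projections $\pi_\lambda$ and $z(\lambda)=\pi_\lambda(z)$. For $a\in F_\lambda$, $\sigma_\lambda(a)$ is the unique simplex containing $a$ in its interior, and $\wedge a=\bigcap\{\wedge v:v\text{ a vertex of }\sigma_\lambda(a)\}$. For each $z\in N_\infty$ the set $\bigcap_\lambda\wedge z(\lambda)$ is a single point, and $\pi(z)$ is defined as that point. For $v\in N^{(0)}_\lambda$ let $\phi_v=\prod_{\alpha\in\lambda}\phi_{\alpha,v(\alpha)}$; $p_\lambda:X\to N_\lambda$ is the canonical map sending $x$ to the point with barycentric coordinates $(\phi_v(x))_{v\in N^{(0)}_\lambda}$. These satisfy $p_\lambda=\pi^\mu_\lambda\circ p_\mu$ for $\lambda\subset\mu$, and $p:X\to N_\infty$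 is the induced map with $\pi_\lambda\circ p=p_\lambda$. *)

theory Defs
  imports "HOL-Analysis.Analysis"
begin

definition tychonoff_space :: "'a topology \<Rightarrow> bool" where
  "tychonoff_space X \<longleftrightarrow> completely_regular_space X \<and> t1_space X"

definition uniformity_on :: "'a topology \<Rightarrow> ('a \<times> 'a) set set \<Rightarrow> bool" where
  "uniformity_on X U \<longleftrightarrow>
     U \<noteq> {} \<and>
     (\<forall>E\<in>U. Id_on (topspace X) \<subseteq> E \<and> E \<subseteq> topspace X \<times> topspace X) \<and>
     (\<forall>E\<in>U. \<forall>D. E \<subseteq> D \<and> D \<subseteq> topspace X \<times> topspace X \<longrightarrow> D \<in> U) \<and>
     (\<forall>E\<in>U. \<forall>D\<in>U. E \<inter> D \<in> U) \<and>
     (\<forall>E\<in>U. converse E \<in> U) \<and>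
     (\<forall>E\<in>U. \<exists>D\<in>U. D O D \<subseteq> E)"

definition compatible_uniformity :: "'a topology \<Rightarrow> ('a \<times> 'a) set set \<Rightarrow> bool" where
  "compatible_uniformity X U \<longleftrightarrow> uniformity_on X U \<and>
     (\<forall>S. openin X S \<longleftrightarrow> S \<subseteq> topspace X \<and> (\<forall>x\<in>S. \<exists>E\<in>U. {y. (x, y) \<in> E} \<subseteq> S))"

definition finest_uniformity :: "'a topology \<Rightarrow> ('a \<times> 'a) set set \<Rightarrow> bool" where
  "finest_uniformity X U \<longleftrightarrow> compatible_uniformity X U \<and>
     (\<forall>U'. compatible_uniformity X U' \<longrightarrow> U' \<subseteq> U)"

definition uniformly_complete :: "'a topology \<Rightarrow> ('a \<times> 'a) set set \<Rightarrow> bool" where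
  "uniformly_complete X U \<longleftrightarrow>
     (\<forall>F::'a filter. F \<noteq> bot \<and> eventually (\<lambda>x. x \<in> topspace X) F \<and>
        (\<forall>E\<in>U. \<exists>A. eventually (\<lambda>x. x \<in> A) F \<and> A \<times> A \<subseteq> E)
        \<longrightarrow> (\<exists>x\<in>topspace X. \<forall>S. openin X S \<and> x \<in> S \<longrightarrow> eventually (\<lambda>y. y \<in> S) F))"

definition topologically_complete :: "'a topology \<Rightarrow> bool" where
  "topologically_complete X \<longleftrightarrow> tychonoff_space X \<and>
     (\<exists>U. finest_uniformity X U \<and> uniformly_complete X U)"

text \<open>\<open>\<phi> V\<close> is the function \<open>\<phi>\<^sub>\<alpha>\<^sub>,\<^sub>V\<close> of the fixed partition of unity of \<open>\<alpha>\<close>.\<close>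
definition normal_cover :: "'a topology \<Rightarrow> 'a set set \<Rightarrow> ('a set \<Rightarrow> 'a \<Rightarrow> real) \<Rightarrow> bool" where
  "normal_cover X \<alpha> \<phi> \<longleftrightarrow>
     (\<forall>V\<in>\<alpha>. closedin X V) \<and> \<Union>\<alpha> = topspace X \<and> locally_finite_in X \<alpha> \<and>
     (\<forall>V\<in>\<alpha>. continuous_map X euclideanreal (\<phi> V) \<and> (\<forall>x\<in>topspace X. 0 \<le> \<phi> V x) \<and>
        X closure_of {x \<in> topspace X. \<phi> V x > 0} \<subseteq> X interior_of V) \<and>
     (\<forall>x\<in>topspace X. (\<Sum>V\<in>{V\<in>\<alpha>. \<phi> V x \<noteq> 0}. \<phi> V x) = 1)"

text \<open>Points of a simplicial complex are given by barycentric coordinates; \<open>Simp\<close> is the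
  predicate "spans a simplex" on finite nonempty vertex sets.\<close>
definition cplx_points :: "('v set \<Rightarrow> bool) \<Rightarrow> ('v \<Rightarrow> real) set" where
  "cplx_points Simp = {t. (\<forall>v. 0 \<le> t v) \<and> Simp {v. t v \<noteq> 0} \<and> sum t {v. t v \<noteq> 0} = 1}"

definition closed_simplex :: "'v set \<Rightarrow> ('v \<Rightarrow> real) set" where
  "closed_simplex S = {t. (\<forall>v. 0 \<le> t v) \<and> (\<forall>v. v \<notin> S \<longrightarrow> t v = 0) \<and> sum t S = 1}"

definition weak_cplx_topology :: "('v set \<Rightarrow> bool) \<Rightarrow> ('v \<Rightarrow> real) topology" where
  "weak_cplx_topology Simp = topology (\<lambda>U. U \<subseteq> cplx_points Simp \<and>
     (\<forall>S. Simp S \<longrightarrow> openin (subtopology (powertop_real UNIV) (closed_simplex S)) (U \<inter> closed_simplex S)))"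

type_synonym 'a vert = "'a set set \<Rightarrow> 'a set"
type_synonym 'a pt = "'a vert \<Rightarrow> real"

definition Lambda :: "'a set set set \<Rightarrow> 'a set set set set" where
  "Lambda \<A> = {L. finite L \<and> L \<subseteq> \<A>}"

definition wedge :: "'a topology \<Rightarrow> 'a set set set \<Rightarrow> 'a vert \<Rightarrow> 'a set" where
  "wedge X L v = topspace X \<inter> \<Inter> (v ` L)"

definition Nverts :: "'a topology \<Rightarrow> 'a set set set \<Rightarrow> 'a vert set" where
  "Nverts X L = {v \<in> PiE L (\<lambda>\<alpha>. \<alpha>). wedge X L v \<noteq> {}}"

definition NSimp :: "'a topology \<Rightarrow> 'a set set set \<Rightarrow> 'a vert set \<Rightarrow> bool" where
  "NSimp X L S \<longleftrightarrow> finite S \<and> S \<noteq> {} \<and> S \<subseteq> Nverts X L \<and>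
     topspace X \<inter> \<Inter> (wedge X L ` S) \<noteq> {}"

definition Ncplx :: "'a topology \<Rightarrow> 'a set set set \<Rightarrow> 'a pt topology" where
  "Ncplx X L = weak_cplx_topology (NSimp X L)"

definition wedge_pt :: "'a topology \<Rightarrow> 'a set set set \<Rightarrow> 'a pt \<Rightarrow> 'a set" where
  "wedge_pt X L a = topspace X \<inter> \<Inter> {wedge X L v | v. a v \<noteq> 0}"

text \<open>The simplicial map \<open>\<pi>\<^sup>M\<^sub>L\<close> (v \<mapsto> v restricted to L) on points.\<close>
definition proj_pt :: "'a set set set \<Rightarrow> 'a pt \<Rightarrow> 'a pt" where
  "proj_pt L a = (\<lambda>w. sum a {v. a v \<noteq> 0 \<and> restrict v L = w})"

definition Ninf_set :: "'a topology \<Rightarrow> 'a set set set \<Rightarrow> ('a set set set \<Rightarrow> 'a pt) set" where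
  "Ninf_set X \<A> = {z \<in> PiE (Lambda \<A>) (\<lambda>L. topspace (Ncplx X L)).
      \<forall>L\<in>Lambda \<A>. \<forall>M\<in>Lambda \<A>. L \<subseteq> M \<longrightarrow> proj_pt L (z M) = z L}"

definition Ninf :: "'a topology \<Rightarrow> 'a set set set \<Rightarrow> ('a set set set \<Rightarrow> 'a pt) topology" where
  "Ninf X \<A> = subtopology (product_topology (\<lambda>L. Ncplx X L) (Lambda \<A>)) (Ninf_set X \<A>)"

definition piX :: "'a topology \<Rightarrow> 'a set set set \<Rightarrow> ('a set set set \<Rightarrow> 'a pt) \<Rightarrow> 'a" where
  "piX X \<A> z = (THE x. x \<in> topspace X \<and> (\<forall>L\<in>Lambda \<A>. x \<in> wedge_pt X L (z L)))"

definition p_lam :: "'a topology \<Rightarrow> ('a set set \<Rightarrow> 'a set \<Rightarrow> 'a \<Rightarrow> real) \<Rightarrow> 'a set set set \<Rightarrow> 'a \<Rightarrow> 'a pt" where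
  "p_lam X \<phi> L x = (\<lambda>v. if v \<in> Nverts X L then (\<Prod>\<alpha>\<in>L. \<phi> \<alpha> (v \<alpha>) x) else 0)"

definition p_inf :: "'a topology \<Rightarrow> 'a set set set \<Rightarrow> ('a set set \<Rightarrow> 'a set \<Rightarrow> 'a \<Rightarrow> real) \<Rightarrow> 'a \<Rightarrow> ('a set set set \<Rightarrow> 'a pt)" where
  "p_inf X \<A> \<phi> x = restrict (\<lambda>L. p_lam X \<phi> L x) (Lambda \<A>)"

end

theory Submission
  imports Defs
begin

text \<open>
  A point \<open>z\<close> of \<open>N\<^sub>\<infinity>\<close> is a coherent family of points \<open>z(\<lambda>)\<close> of the nerves. Their carriers form an
  inverse system of finite nonempty sets of vertices, so by compactness there is a choice \<open>g(\<alpha>) \<in> \<alpha>\<close>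
  all of whose restrictions are carrier vertices. Condition (II) gives a point in every \<open>g(\<alpha>)\<close>, and
  condition (I) shows that it lies in every \<open>\<and>z(\<lambda>)\<close> and is the only such point; this is \<open>\<pi>(z)\<close>.

  The fibre over \<open>x\<close> lies in the product of the finite simplices spanned by the vertices containing
  \<open>x\<close>, hence is compact. Extending points of \<open>N\<^sub>\<lambda>\<close> by the partition of unity at \<open>x\<close> produces points of
  the fibre with a prescribed coordinate, which together with local finiteness makes \<open>\<pi>\<close> closed.
  The homotopy is the straight line from \<open>z(\<lambda>)\<close> to \<open>p\<^sub>\<lambda>(\<pi> z)\<close> inside the simplex spanned by the vertices
  containing \<open>\<pi> z\<close>; locally it stays in one finite simplex, where the weak topology is the product
  topology, so it is continuous.
\<close>

section \<open>Finite inverse systems and products\<close>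

lemma closedin_product_discrete_agree:
  fixes S :: "'i \<Rightarrow> 'b set" and A :: "'i set" and P
  defines "P \<equiv> product_topology (\<lambda>\<alpha>. discrete_topology (S \<alpha>)) A"
  assumes W: "finite W" and L: "L \<subseteq> A" and W_S: "\<And>w \<alpha>. w \<in> W \<Longrightarrow> \<alpha> \<in> L \<Longrightarrow> w \<alpha> \<in> S \<alpha>"
  shows "closedin P {g \<in> topspace P. \<exists>w\<in>W. \<forall>\<alpha>\<in>L. g \<alpha> = w \<alpha>}"
proof -
  \<comment> \<open>\<open>topspace P\<close> keeps the intersection inside \<open>P\<close> when \<open>L = {}\<close>.\<close>
  define E where "E w = \<Inter>(insert (topspace P) ((\<lambda>\<alpha>. {g \<in> topspace P. g \<alpha> \<in> {w \<alpha>} \<inter> S \<alpha>}) ` L))" for w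
  have "closedin P {g \<in> topspace P. g \<alpha> \<in> {w \<alpha>} \<inter> S \<alpha>}" if "\<alpha> \<in> L" for \<alpha> w
  proof (rule closedin_continuous_map_preimage)
    show "continuous_map P (discrete_topology (S \<alpha>)) (\<lambda>g. g \<alpha>)"
      unfolding P_def using that L by (intro continuous_map_product_projection) auto
  qed auto
  then have "closedin P (E w)" for w
    unfolding E_def by (intro closedin_Inter) auto
  moreover have "{g \<in> topspace P. \<exists>w\<in>W. \<forall>\<alpha>\<in>L. g \<alpha> = w \<alpha>} = (\<Union>w\<in>W. E w)"
  proof (intro set_eqI iffI)
    fix g assume "g \<in> {g \<in> topspace P. \<exists>w\<in>W. \<forall>\<alpha>\<in>L. g \<alpha> = w \<alpha>}"
    then obtain w where "g \<in> topspace P" "w \<in> W" "\<forall>\<alpha>\<in>L. g \<alpha> = w \<alpha>" by auto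
    then show "g \<in> (\<Union>w\<in>W. E w)" using W_S by (intro UN_I[of w]) (auto simp: E_def)
  qed (auto simp: E_def)
  ultimately show ?thesis using W by (auto intro: closedin_Union)
qed

text \<open>Tychonoff: \<open>T\<close> induces closed sets \<open>C L\<close> with the finite intersection property in the compact
  product of the finite discrete spaces \<open>S \<alpha>\<close> of values at \<open>\<alpha>\<close>.\<close>
lemma inverse_limit_finite_nonempty:
  fixes T :: "'i set \<Rightarrow> ('i \<Rightarrow> 'b) set"
  assumes fin: "\<And>L. finite L \<Longrightarrow> L \<subseteq> A \<Longrightarrow> finite (T L)"
    and ne: "\<And>L. finite L \<Longrightarrow> L \<subseteq> A \<Longrightarrow> T L \<noteq> {}"
    and ext: "\<And>L. finite L \<Longrightarrow> L \<subseteq> A \<Longrightarrow> T L \<subseteq> extensional L"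
    and restr: "\<And>L M w. finite M \<Longrightarrow> M \<subseteq> A \<Longrightarrow> L \<subseteq> M \<Longrightarrow> w \<in> T M \<Longrightarrow> restrict w L \<in> T L"
  obtains g where "\<And>L. finite L \<Longrightarrow> L \<subseteq> A \<Longrightarrow> restrict g L \<in> T L"
proof -
  define S where "S \<alpha> = (\<lambda>w. w \<alpha>) ` T {\<alpha>}" for \<alpha>
  have in_S: "w \<alpha> \<in> S \<alpha>" if "finite L" "L \<subseteq> A" "w \<in> T L" "\<alpha> \<in> L" for L w \<alpha>
  proof -
    have "restrict w {\<alpha>} \<in> T {\<alpha>}" using that by (intro restr[of L]) auto
    then show ?thesis unfolding S_def using that(4) by (intro image_eqI[of _ _ "restrict w {\<alpha>}"]) auto
  qed
  define P where "P = product_topology (\<lambda>\<alpha>. discrete_topology (S \<alpha>)) A"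
  have "compact_space P"
    unfolding P_def compact_space_product_topology using fin by (simp add: compact_space_discrete_topology S_def)
  define C where "C L = {g \<in> topspace P. \<exists>w\<in>T L. \<forall>\<alpha>\<in>L. g \<alpha> = w \<alpha>}" for L
  have closed: "closedin P (C L)" if L: "finite L" "L \<subseteq> A" for L
    unfolding C_def P_def using fin[OF L] L(2) in_S[OF L] by (rule closedin_product_discrete_agree)
  have C_antimono: "C M \<subseteq> C L" if M: "finite M" "M \<subseteq> A" and "L \<subseteq> M" for L M
  proof
    fix g assume "g \<in> C M"
    then obtain w where g: "g \<in> topspace P" "\<forall>\<alpha>\<in>M. g \<alpha> = w \<alpha>" and w: "w \<in> T M"
      by (auto simp: C_def)
    have "restrict w L \<in> T L" by (rule restr[OF M \<open>L \<subseteq> M\<close> w])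
    moreover have "\<forall>\<alpha>\<in>L. g \<alpha> = restrict w L \<alpha>" using g(2) \<open>L \<subseteq> M\<close> by auto
    ultimately show "g \<in> C L" using g(1) unfolding C_def by blast
  qed
  have C_nonempty: "C L \<noteq> {}" if L: "finite L" "L \<subseteq> A" for L
  proof -
    obtain w where w: "w \<in> T L" using ne[OF L] by blast
    define g where "g = restrict (\<lambda>\<alpha>. if \<alpha> \<in> L then w \<alpha> else (SOME V. V \<in> S \<alpha>)) A"
    have "g \<alpha> \<in> S \<alpha>" if "\<alpha> \<in> A" for \<alpha>
    proof (cases "\<alpha> \<in> L")
      case False
      have "S \<alpha> \<noteq> {}" using ne[of "{\<alpha>}"] that by (simp add: S_def)
      then show ?thesis using False that by (simp add: g_def some_in_eq)
    qed (use in_S[OF L w] that in \<open>simp add: g_def\<close>)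
    then have "g \<in> topspace P" by (simp add: P_def g_def)
    moreover have "\<forall>\<alpha>\<in>L. g \<alpha> = w \<alpha>" using L(2) by (auto simp: g_def)
    ultimately have "g \<in> C L" using w unfolding C_def by blast
    then show ?thesis by blast
  qed
  have fip: "\<Inter>\<F> \<noteq> {}" if F: "finite \<F>" "\<F> \<subseteq> C ` {L. finite L \<and> L \<subseteq> A}" for \<F>
  proof -
    obtain Ls where Ls: "finite Ls" "Ls \<subseteq> {L. finite L \<and> L \<subseteq> A}" "\<F> = C ` Ls"
      using finite_subset_image[OF F] by blast
    have L: "finite (\<Union>Ls)" "\<Union>Ls \<subseteq> A" using Ls(1,2) by (auto intro!: finite_Union)
    have "C (\<Union>Ls) \<subseteq> \<Inter>\<F>" using C_antimono[OF L] unfolding Ls(3) by blast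
    then show ?thesis using C_nonempty[OF L] by blast
  qed
  have "\<Inter>(C ` {L. finite L \<and> L \<subseteq> A}) \<noteq> {}"
  proof -
    have "\<forall>D\<in>C ` {L. finite L \<and> L \<subseteq> A}. closedin P D" using closed by blast
    moreover have "\<forall>\<F>. finite \<F> \<and> \<F> \<subseteq> C ` {L. finite L \<and> L \<subseteq> A} \<longrightarrow> \<Inter>\<F> \<noteq> {}"
      using fip by blast
    ultimately show ?thesis using \<open>compact_space P\<close> unfolding compact_space_fip by blast
  qed
  then obtain g where "g \<in> \<Inter>(C ` {L. finite L \<and> L \<subseteq> A})" by blast
  then have g: "g \<in> C L" if "finite L" "L \<subseteq> A" for L using that by blast
  have "restrict g L \<in> T L" if L: "finite L" "L \<subseteq> A" for L
  proof -
    obtain w where "w \<in> T L" "\<forall>\<alpha>\<in>L. g \<alpha> = w \<alpha>" using g[OF L] by (auto simp: C_def)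
    moreover then have "restrict g L = w" using ext[OF L] by (auto simp: extensional_def fun_eq_iff)
    ultimately show ?thesis by simp
  qed
  then show thesis using that by blast
qed

lemma compactin_product_nbhd_finite_coordinates:
  assumes "compactin (product_topology Y I) K" "openin (product_topology Y I) U" "K \<subseteq> U"
  obtains J where "finite J" "J \<subseteq> I"
    "\<And>z s. z \<in> topspace (product_topology Y I) \<Longrightarrow> s \<in> K \<Longrightarrow> \<forall>i\<in>J. z i = s i \<Longrightarrow> z \<in> U"
proof -
  have "\<forall>s\<in>K. \<exists>W. finite {i \<in> I. W i \<noteq> topspace (Y i)} \<and> (\<forall>i\<in>I. openin (Y i) (W i)) \<and>
      s \<in> PiE I W \<and> PiE I W \<subseteq> U"
    using assms(2,3) unfolding openin_product_topology_alt by (meson subsetD)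
  then obtain W where "\<forall>s\<in>K. finite {i \<in> I. W s i \<noteq> topspace (Y i)} \<and> (\<forall>i\<in>I. openin (Y i) (W s i)) \<and>
      s \<in> PiE I (W s) \<and> PiE I (W s) \<subseteq> U"
    by (elim bchoice[elim_format] exE) (rule that)
  then have W: "\<And>s. s \<in> K \<Longrightarrow> finite {i \<in> I. W s i \<noteq> topspace (Y i)}"
    "\<And>s i. s \<in> K \<Longrightarrow> i \<in> I \<Longrightarrow> openin (Y i) (W s i)"
    "\<And>s. s \<in> K \<Longrightarrow> s \<in> PiE I (W s)" "\<And>s. s \<in> K \<Longrightarrow> PiE I (W s) \<subseteq> U"
    by blast+
  have "\<forall>V\<in>(\<lambda>s. PiE I (W s)) ` K. openin (product_topology Y I) V"
    using W(1,2) by (auto simp: openin_PiE_gen)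
  moreover have "K \<subseteq> \<Union>((\<lambda>s. PiE I (W s)) ` K)" using W(3) by blast
  ultimately obtain \<F> where "finite \<F>" "\<F> \<subseteq> (\<lambda>s. PiE I (W s)) ` K" "K \<subseteq> \<Union>\<F>"
    using assms(1) unfolding compactin_def by meson
  then obtain Ks where Ks: "finite Ks" "Ks \<subseteq> K" "K \<subseteq> (\<Union>s\<in>Ks. PiE I (W s))"
    by (metis finite_subset_image)
  define J where "J = (\<Union>s\<in>Ks. {i \<in> I. W s i \<noteq> topspace (Y i)})"
  show thesis
  proof
    show "finite J" "J \<subseteq> I" using Ks W(1) by (auto simp: J_def)
    fix z s assume z: "z \<in> topspace (product_topology Y I)" and "s \<in> K" and zs: "\<forall>i\<in>J. z i = s i"
    then obtain s' where s': "s' \<in> Ks" "s \<in> PiE I (W s')" using Ks(3) by blast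
    have "z i \<in> W s' i" if "i \<in> I" for i
    proof (cases "W s' i = topspace (Y i)")
      case True
      then show ?thesis using z that by auto
    next
      case False
      then have "z i = s i" using zs s'(1) that by (auto simp: J_def)
      then show ?thesis using s'(2) that by auto
    qed
    then have "z \<in> PiE I (W s')" using z by (auto simp: PiE_iff)
    then show "z \<in> U" using W(4) s' Ks(2) by blast
  qed
qed

section \<open>The weak topology of an abstract simplicial complex\<close>

lemma topspace_powertop_real [simp]: "topspace (powertop_real UNIV) = UNIV"
  by (auto simp: PiE_iff)

lemma istopology_weak_cplx:
  "istopology (\<lambda>U. U \<subseteq> cplx_points Simp \<and>
     (\<forall>S. Simp S \<longrightarrow> openin (subtopology (powertop_real UNIV) (closed_simplex S)) (U \<inter> closed_simplex S)))"
proof -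
  have Int: "openin Y (U \<inter> V \<inter> C)" if "openin Y (U \<inter> C)" "openin Y (V \<inter> C)" for Y U V C
    using openin_Int[OF that] by (simp add: Int_ac)
  have Union: "openin Y (\<Union>\<U> \<inter> C)" if "\<forall>U\<in>\<U>. openin Y (U \<inter> C)" for Y \<U> C
  proof -
    have "openin Y (\<Union>((\<lambda>U. U \<inter> C) ` \<U>))" using that by (intro openin_Union) auto
    moreover have "\<Union>((\<lambda>U. U \<inter> C) ` \<U>) = \<Union>\<U> \<inter> C" by auto
    ultimately show ?thesis by simp
  qed
  show ?thesis unfolding istopology_def
    by (intro conjI allI impI) (auto intro!: Int Union)
qed

lemma openin_weak_cplx_topology:
  "openin (weak_cplx_topology Simp) U \<longleftrightarrow> U \<subseteq> cplx_points Simp \<and>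
     (\<forall>S. Simp S \<longrightarrow> openin (subtopology (powertop_real UNIV) (closed_simplex S)) (U \<inter> closed_simplex S))"
  unfolding weak_cplx_topology_def topology_inverse'[OF istopology_weak_cplx] by simp

lemma closed_simplex_subset_cube:
  assumes "finite S"
  shows "closed_simplex S \<subseteq> PiE UNIV (\<lambda>v. {0..1::real})"
proof
  fix t assume t: "t \<in> closed_simplex S"
  have "t v \<le> 1" for v
  proof (cases "v \<in> S")
    case True
    then have "t v \<le> sum t S" using t assms by (intro member_le_sum) (auto simp: closed_simplex_def)
    then show ?thesis using t by (simp add: closed_simplex_def)
  qed (use t in \<open>simp add: closed_simplex_def\<close>)
  then show "t \<in> PiE UNIV (\<lambda>v. {0..1::real})" using t by (auto simp: closed_simplex_def)
qed

lemma closedin_closed_simplex: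
  assumes "finite S"
  shows "closedin (powertop_real UNIV) (closed_simplex S)"
proof -
  have nonneg: "closedin (powertop_real UNIV) (PiE UNIV (\<lambda>v. if v \<in> S then {0..} else {0::real}))"
    by (subst closedin_product_topology) auto
  have "continuous_map (powertop_real UNIV) euclideanreal (\<lambda>t. sum t S)"
    using assms by (intro continuous_map_sum continuous_map_product_projection) auto
  then have sum1: "closedin (powertop_real UNIV) {t \<in> topspace (powertop_real UNIV). sum t S \<in> {1}}"
    by (rule closedin_continuous_map_preimage) auto
  have "closed_simplex S = PiE UNIV (\<lambda>v. if v \<in> S then {0..} else {0::real}) \<inter>
      {t \<in> topspace (powertop_real UNIV). sum t S \<in> {1}}"
    by (auto simp: closed_simplex_def PiE_iff split: if_splits) (metis order_refl)
  then show ?thesis using closedin_Int[OF nonneg sum1] by simp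
qed

lemma compactin_closed_simplex:
  assumes "finite S"
  shows "compactin (powertop_real UNIV) (closed_simplex S)"
proof -
  have "compactin (powertop_real UNIV) (PiE UNIV (\<lambda>v. {0..1::real}))"
    by (subst compactin_PiE) auto
  then show ?thesis
    using closed_compactin closed_simplex_subset_cube[OF assms] closedin_closed_simplex[OF assms] by metis
qed

lemma openin_positive_coordinates:
  assumes "finite F"
  shows "openin (powertop_real UNIV) {a. \<forall>v\<in>F. 0 < a v}"
proof -
  have "openin (powertop_real UNIV) {a \<in> topspace (powertop_real UNIV). a v \<in> {0<..}}" for v
    by (intro openin_continuous_map_preimage[where Y=euclideanreal] continuous_map_product_projection) auto
  then have "openin (powertop_real UNIV) (topspace (powertop_real UNIV) \<inter> \<Inter>((\<lambda>v. {a. 0 < a v}) ` F))"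
    using assms by (intro openin_Int_Inter openin_topspace) auto
  moreover have "topspace (powertop_real UNIV) \<inter> \<Inter>((\<lambda>v. {a. 0 < a v}) ` F) = {a. \<forall>v\<in>F. 0 < a v}"
    by auto
  ultimately show ?thesis by simp
qed

lemma cplx_points_in_closed_simplex:
  assumes "a \<in> cplx_points Simp" "finite B" "{v. a v \<noteq> 0} \<subseteq> B"
  shows "a \<in> closed_simplex B"
proof -
  have "sum a B = sum a {v. a v \<noteq> 0}" using assms(2,3) by (intro sum.mono_neutral_right) auto
  then show ?thesis using assms(1,3) by (auto simp: closed_simplex_def cplx_points_def)
qed

locale abstract_simplicial_complex =
  fixes Simp :: "'v set \<Rightarrow> bool"
  assumes simplex_finite: "Simp S \<Longrightarrow> finite S"
    and simplex_face: "Simp S \<Longrightarrow> T \<subseteq> S \<Longrightarrow> T \<noteq> {} \<Longrightarrow> Simp T"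
begin

lemma closed_simplex_subset_cplx_points:
  assumes "Simp S"
  shows "closed_simplex S \<subseteq> cplx_points Simp"
proof
  fix t assume t: "t \<in> closed_simplex S"
  have supp: "{v. t v \<noteq> 0} \<subseteq> S" using t by (auto simp: closed_simplex_def)
  have "sum t {v. t v \<noteq> 0} = sum t S"
    using simplex_finite[OF assms] supp by (intro sum.mono_neutral_left) auto
  then have sum1: "sum t {v. t v \<noteq> 0} = 1" using t by (simp add: closed_simplex_def)
  then have "{v. t v \<noteq> 0} \<noteq> {}" by force
  then show "t \<in> cplx_points Simp"
    using t sum1 simplex_face[OF assms supp] by (simp add: cplx_points_def closed_simplex_def)
qed

lemma topspace_weak_cplx_topology [simp]: "topspace (weak_cplx_topology Simp) = cplx_points Simp"
proof (rule subset_antisym)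
  show "topspace (weak_cplx_topology Simp) \<subseteq> cplx_points Simp"
    using openin_topspace[of "weak_cplx_topology Simp"] unfolding openin_weak_cplx_topology by blast
  have "openin (subtopology (powertop_real UNIV) (closed_simplex S)) (cplx_points Simp \<inter> closed_simplex S)"
    if "Simp S" for S
    using closed_simplex_subset_cplx_points[OF that] openin_topspace[of "subtopology (powertop_real UNIV) (closed_simplex S)"]
    by (simp add: Int_absorb1)
  then have "openin (weak_cplx_topology Simp) (cplx_points Simp)"
    by (simp add: openin_weak_cplx_topology)
  then show "cplx_points Simp \<subseteq> topspace (weak_cplx_topology Simp)"
    by (rule openin_subset)
qed

lemma openin_weak_cplx_topology_Int:
  assumes "openin (powertop_real UNIV) T"
  shows "openin (weak_cplx_topology Simp) (T \<inter> cplx_points Simp)"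
  unfolding openin_weak_cplx_topology
proof (intro conjI allI impI)
  fix S assume "Simp S"
  then have "T \<inter> cplx_points Simp \<inter> closed_simplex S = closed_simplex S \<inter> T"
    using closed_simplex_subset_cplx_points by auto
  then show "openin (subtopology (powertop_real UNIV) (closed_simplex S)) (T \<inter> cplx_points Simp \<inter> closed_simplex S)"
    using openin_subtopology_Int2[OF assms] by simp
qed auto

lemma continuous_map_weak_cplx_topology_id:
  "continuous_map (weak_cplx_topology Simp) (powertop_real UNIV) id"
  unfolding continuous_map_def
proof (intro conjI allI impI)
  fix U :: "('v \<Rightarrow> real) set" assume "openin (powertop_real UNIV) U"
  then have "openin (weak_cplx_topology Simp) (U \<inter> cplx_points Simp)"
    by (rule openin_weak_cplx_topology_Int)
  moreover have "{x \<in> topspace (weak_cplx_topology Simp). id x \<in> U} = U \<inter> cplx_points Simp"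
    by auto
  ultimately show "openin (weak_cplx_topology Simp) {x \<in> topspace (weak_cplx_topology Simp). id x \<in> U}"
    by simp
qed simp

lemma Hausdorff_weak_cplx_topology: "Hausdorff_space (weak_cplx_topology Simp)"
  by (rule Hausdorff_space_injective_preimage[OF _ continuous_map_weak_cplx_topology_id])
    (auto simp: Hausdorff_space_product_topology)

lemma continuous_map_into_weak_cplx_topology:
  assumes S: "Simp S" and g: "continuous_map T (powertop_real UNIV) g"
    and gS: "\<And>x. x \<in> topspace T \<Longrightarrow> g x \<in> closed_simplex S"
  shows "continuous_map T (weak_cplx_topology Simp) g"
  unfolding continuous_map_def
proof (intro conjI allI impI)
  show "g \<in> topspace T \<rightarrow> topspace (weak_cplx_topology Simp)"
    using gS closed_simplex_subset_cplx_points[OF S] by auto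
  fix U assume "openin (weak_cplx_topology Simp) U"
  then have "openin (subtopology (powertop_real UNIV) (closed_simplex S)) (U \<inter> closed_simplex S)"
    using S by (simp add: openin_weak_cplx_topology)
  then obtain W where W: "openin (powertop_real UNIV) W" "U \<inter> closed_simplex S = W \<inter> closed_simplex S"
    by (auto simp: openin_subtopology)
  have "{x \<in> topspace T. g x \<in> U} = {x \<in> topspace T. g x \<in> W}"
    using W(2) gS by blast
  then show "openin T {x \<in> topspace T. g x \<in> U}"
    using openin_continuous_map_preimage[OF g W(1)] by simp
qed

lemma compactin_weak_cplx_topology_closed_simplex:
  assumes "Simp S"
  shows "compactin (weak_cplx_topology Simp) (closed_simplex S)"
proof -
  have cpt: "compactin (subtopology (powertop_real UNIV) (closed_simplex S)) (closed_simplex S)"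
    using compactin_closed_simplex[OF simplex_finite[OF assms]] by (simp add: compactin_subtopology)
  have "continuous_map (subtopology (powertop_real UNIV) (closed_simplex S)) (weak_cplx_topology Simp) id"
    by (rule continuous_map_into_weak_cplx_topology[OF assms continuous_map_from_subtopology]) auto
  from image_compactin[OF cpt this] show ?thesis by simp
qed

end

section \<open>The nerves \<open>N\<^sub>L\<close> and the maps between them\<close>

lemma proj_pt_nonzeroD:
  assumes "proj_pt L a w \<noteq> 0"
  obtains v where "a v \<noteq> 0" "restrict v L = w"
proof -
  have "{v. a v \<noteq> 0 \<and> restrict v L = w} \<noteq> {}"
    using assms unfolding proj_pt_def by (metis sum.empty)
  then show thesis using that by blast
qed

lemma proj_pt_eq_sum:
  assumes "finite T" "{v. a v \<noteq> 0} \<subseteq> T"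
  shows "proj_pt L a w = sum a {v \<in> T. restrict v L = w}"
  unfolding proj_pt_def using assms by (intro sum.mono_neutral_left) auto

lemma proj_pt_nonneg: "(\<And>v. 0 \<le> a v) \<Longrightarrow> 0 \<le> proj_pt L a w"
  unfolding proj_pt_def by (intro sum_nonneg) auto

lemma proj_pt_support:
  assumes fin: "finite {v. a v \<noteq> 0}" and nonneg: "\<And>v. 0 \<le> a v"
  shows "{w. proj_pt L a w \<noteq> 0} = (\<lambda>v. restrict v L) ` {v. a v \<noteq> 0}"
proof (intro set_eqI iffI)
  fix w assume "w \<in> {w. proj_pt L a w \<noteq> 0}"
  then show "w \<in> (\<lambda>v. restrict v L) ` {v. a v \<noteq> 0}"
    by (auto elim: proj_pt_nonzeroD)
next
  fix w assume "w \<in> (\<lambda>v. restrict v L) ` {v. a v \<noteq> 0}"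
  then obtain v where v: "a v \<noteq> 0" "restrict v L = w" by auto
  have "a v \<le> proj_pt L a w"
    unfolding proj_pt_def using v fin nonneg by (intro member_le_sum) auto
  then show "w \<in> {w. proj_pt L a w \<noteq> 0}" using v nonneg[of v] by auto
qed

lemma sum_proj_pt:
  assumes fin: "finite {v. a v \<noteq> 0}"
  shows "sum (proj_pt L a) {w. proj_pt L a w \<noteq> 0} = sum a {v. a v \<noteq> 0}"
proof -
  let ?I = "(\<lambda>v. restrict v L) ` {v. a v \<noteq> 0}"
  have "{w. proj_pt L a w \<noteq> 0} \<subseteq> ?I" by (auto elim: proj_pt_nonzeroD)
  then have "sum (proj_pt L a) {w. proj_pt L a w \<noteq> 0} = sum (proj_pt L a) ?I"
    using fin by (intro sum.mono_neutral_left) auto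
  also have "\<dots> = sum a {v. a v \<noteq> 0}"
    unfolding proj_pt_def using sum.image_gen[OF fin, of a "\<lambda>v. restrict v L"] by simp
  finally show ?thesis .
qed

lemma proj_pt_proj_pt:
  assumes LM: "L \<subseteq> M" and fin: "finite {v. a v \<noteq> 0}"
  shows "proj_pt L (proj_pt M a) = proj_pt L a"
proof
  fix w
  let ?S = "{v. a v \<noteq> 0}"
  let ?I = "(\<lambda>v. restrict v M) ` ?S"
  let ?Sw = "{v \<in> ?S. restrict v L = w}"
  have restrict_LM: "restrict (restrict v M) L = restrict v L" for v :: "'a vert"
    using LM by (auto simp: restrict_def fun_eq_iff)
  have "{u. proj_pt M a u \<noteq> 0} \<subseteq> ?I" by (auto elim: proj_pt_nonzeroD)
  then have "proj_pt L (proj_pt M a) w = (\<Sum>u\<in>{u \<in> ?I. restrict u L = w}. proj_pt M a u)"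
    using fin by (intro proj_pt_eq_sum) auto
  also have "\<dots> = (\<Sum>u\<in>{u \<in> ?I. restrict u L = w}. sum a {v \<in> ?Sw. restrict v M = u})"
  proof (intro sum.cong refl)
    fix u assume u: "u \<in> {u \<in> ?I. restrict u L = w}"
    have "restrict v L = w" if "restrict v M = u" for v
    proof -
      have "restrict v L = restrict (restrict v M) L" by (rule restrict_LM[symmetric])
      also have "\<dots> = w" using that u by simp
      finally show ?thesis .
    qed
    then have "{v. a v \<noteq> 0 \<and> restrict v M = u} = {v \<in> ?Sw. restrict v M = u}"
      by auto
    then show "proj_pt M a u = sum a {v \<in> ?Sw. restrict v M = u}" by (simp add: proj_pt_def)
  qed
  also have "\<dots> = sum a ?Sw"
    using fin restrict_LM by (intro sum.group) auto
  also have "\<dots> = proj_pt L a w" by (simp add: proj_pt_def)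
  finally show "proj_pt L (proj_pt M a) w = proj_pt L a w" .
qed

lemma proj_pt_extensional:
  assumes "\<And>v. a v \<noteq> 0 \<Longrightarrow> v \<in> extensional L"
  shows "proj_pt L a = a"
proof
  fix w
  have "{v. a v \<noteq> 0 \<and> restrict v L = w} = (if a w = 0 then {} else {w})"
    using assms by (auto simp: extensional_restrict)
  then show "proj_pt L a w = a w" by (simp add: proj_pt_def)
qed

lemma proj_pt_convex_comb:
  assumes "finite {v. a v \<noteq> 0}" "finite {v. b v \<noteq> 0}"
  shows "proj_pt L (\<lambda>v. s * a v + t * b v) w = s * proj_pt L a w + t * proj_pt L b w"
proof -
  let ?T = "{v. a v \<noteq> 0} \<union> {v. b v \<noteq> 0}"
  have T: "finite ?T" using assms by simp
  have "proj_pt L (\<lambda>v. s * a v + t * b v) w = (\<Sum>v\<in>{v \<in> ?T. restrict v L = w}. s * a v + t * b v)"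
    by (rule proj_pt_eq_sum[OF T]) auto
  also have "\<dots> = s * sum a {v \<in> ?T. restrict v L = w} + t * sum b {v \<in> ?T. restrict v L = w}"
    by (simp add: sum.distrib sum_distrib_left)
  also have "\<dots> = s * proj_pt L a w + t * proj_pt L b w"
    using proj_pt_eq_sum[OF T, of a L w] proj_pt_eq_sum[OF T, of b L w] by auto
  finally show ?thesis .
qed

lemma wedge_iff: "x \<in> wedge X L v \<longleftrightarrow> x \<in> topspace X \<and> (\<forall>\<alpha>\<in>L. x \<in> v \<alpha>)"
  unfolding wedge_def by blast

lemma wedge_pt_iff: "x \<in> wedge_pt X L a \<longleftrightarrow> x \<in> topspace X \<and> (\<forall>v. a v \<noteq> 0 \<longrightarrow> x \<in> wedge X L v)"
  unfolding wedge_pt_def by blast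

lemma wedge_restrict: "x \<in> wedge X M v \<Longrightarrow> L \<subseteq> M \<Longrightarrow> x \<in> wedge X L (restrict v L)"
  by (auto simp: wedge_iff)

lemma Nverts_restrict:
  assumes "v \<in> Nverts X M" "L \<subseteq> M"
  shows "restrict v L \<in> Nverts X L"
proof -
  obtain x where "x \<in> wedge X M v" using assms(1) by (auto simp: Nverts_def)
  then have "x \<in> wedge X L (restrict v L)" using assms(2) by (rule wedge_restrict)
  moreover have "restrict v L \<in> PiE L (\<lambda>\<alpha>. \<alpha>)" using assms by (auto simp: Nverts_def PiE_iff)
  ultimately show ?thesis by (auto simp: Nverts_def)
qed

lemma NSimp_restrict_image:
  assumes S: "NSimp X M S" and LM: "L \<subseteq> M"
  shows "NSimp X L ((\<lambda>v. restrict v L) ` S)"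
  unfolding NSimp_def
proof (intro conjI)
  obtain x where "x \<in> topspace X" "\<forall>v\<in>S. x \<in> wedge X M v" using S unfolding NSimp_def by blast
  then have "x \<in> topspace X \<inter> \<Inter>(wedge X L ` (\<lambda>v. restrict v L) ` S)"
    using wedge_restrict[OF _ LM] by blast
  then show "topspace X \<inter> \<Inter>(wedge X L ` (\<lambda>v. restrict v L) ` S) \<noteq> {}" by blast
  show "(\<lambda>v. restrict v L) ` S \<subseteq> Nverts X L" using S Nverts_restrict[OF _ LM] by (auto simp: NSimp_def)
qed (use S in \<open>simp_all add: NSimp_def\<close>)

lemma abstract_simplicial_complex_NSimp: "abstract_simplicial_complex (NSimp X L)"
proof
  fix S T assume "NSimp X L S" "T \<subseteq> S" "T \<noteq> {}"
  then show "NSimp X L T" unfolding NSimp_def by (blast intro: finite_subset)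
qed (simp add: NSimp_def)

interpretation nerve: abstract_simplicial_complex "NSimp X L" for X L
  by (rule abstract_simplicial_complex_NSimp)

lemma topspace_Ncplx [simp]: "topspace (Ncplx X L) = cplx_points (NSimp X L)"
  by (simp add: Ncplx_def)

lemma openin_Ncplx:
  "openin (Ncplx X L) U \<longleftrightarrow> U \<subseteq> cplx_points (NSimp X L) \<and>
     (\<forall>S. NSimp X L S \<longrightarrow> openin (subtopology (powertop_real UNIV) (closed_simplex S)) (U \<inter> closed_simplex S))"
  by (simp add: Ncplx_def openin_weak_cplx_topology)

lemma openin_Ncplx_positive:
  assumes "finite F"
  shows "openin (Ncplx X L) {a \<in> cplx_points (NSimp X L). \<forall>v\<in>F. 0 < a v}"
proof -
  have "{a \<in> cplx_points (NSimp X L). \<forall>v\<in>F. 0 < a v} = {a. \<forall>v\<in>F. 0 < a v} \<inter> cplx_points (NSimp X L)"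
    by auto
  then show ?thesis
    using nerve.openin_weak_cplx_topology_Int[OF openin_positive_coordinates[OF assms]] by (simp add: Ncplx_def)
qed

lemma continuous_map_Ncplx_id: "continuous_map (Ncplx X L) (powertop_real UNIV) id"
  unfolding Ncplx_def by (rule nerve.continuous_map_weak_cplx_topology_id)

lemma Hausdorff_Ncplx: "Hausdorff_space (Ncplx X L)"
  unfolding Ncplx_def by (rule nerve.Hausdorff_weak_cplx_topology)

lemma cplx_points_NSimpD:
  assumes "a \<in> cplx_points (NSimp X L)"
  shows "finite {v. a v \<noteq> 0}" "{v. a v \<noteq> 0} \<noteq> {}" "{v. a v \<noteq> 0} \<subseteq> Nverts X L"
    "\<And>v. 0 \<le> a v" "sum a {v. a v \<noteq> 0} = 1"
    "\<exists>x\<in>topspace X. \<forall>v. a v \<noteq> 0 \<longrightarrow> x \<in> wedge X L v"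
  using assms unfolding cplx_points_def NSimp_def by blast+

lemma cplx_points_NSimpI:
  assumes "\<And>v. 0 \<le> a v" "finite {v. a v \<noteq> 0}" "sum a {v. a v \<noteq> 0} = 1"
    "{v. a v \<noteq> 0} \<subseteq> Nverts X L" "x \<in> topspace X" "\<And>v. a v \<noteq> 0 \<Longrightarrow> x \<in> wedge X L v"
  shows "a \<in> cplx_points (NSimp X L)"
proof -
  have "{v. a v \<noteq> 0} \<noteq> {}" using assms(3) by force
  moreover have "x \<in> topspace X \<inter> \<Inter>(wedge X L ` {v. a v \<noteq> 0})" using assms(5,6) by blast
  ultimately show ?thesis using assms(1-4) unfolding cplx_points_def NSimp_def by blast
qed

lemma proj_pt_in_cplx_points:
  assumes "a \<in> cplx_points (NSimp X M)" "L \<subseteq> M"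
  shows "proj_pt L a \<in> cplx_points (NSimp X L)"
proof -
  note a = cplx_points_NSimpD[OF assms(1)]
  obtain x where x: "x \<in> topspace X" "\<And>v. a v \<noteq> 0 \<Longrightarrow> x \<in> wedge X M v" using a(6) by blast
  show ?thesis
  proof (rule cplx_points_NSimpI)
    show "finite {w. proj_pt L a w \<noteq> 0}" using a(1) proj_pt_support[OF a(1,4), of L] by simp
    show "sum (proj_pt L a) {w. proj_pt L a w \<noteq> 0} = 1" using sum_proj_pt[OF a(1)] a(5) by simp
    show "x \<in> wedge X L w" if "proj_pt L a w \<noteq> 0" for w
    proof -
      obtain v where "a v \<noteq> 0" "restrict v L = w" using \<open>proj_pt L a w \<noteq> 0\<close> by (rule proj_pt_nonzeroD)
      then show ?thesis using wedge_restrict[OF x(2) assms(2)] by blast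
    qed
    show "{w. proj_pt L a w \<noteq> 0} \<subseteq> Nverts X L"
    proof
      fix w assume "w \<in> {w. proj_pt L a w \<noteq> 0}"
      then obtain v where "a v \<noteq> 0" "restrict v L = w" by (auto elim: proj_pt_nonzeroD)
      then show "w \<in> Nverts X L" using a(3) Nverts_restrict[OF _ assms(2)] by blast
    qed
  qed (use x(1) proj_pt_nonneg a(4) in auto)
qed

lemma proj_pt_in_closed_simplex:
  assumes "NSimp X M S" "L \<subseteq> M" "a \<in> closed_simplex S"
  shows "proj_pt L a \<in> closed_simplex ((\<lambda>v. restrict v L) ` S)"
proof -
  have fin: "finite S" using assms(1) by (rule nerve.simplex_finite)
  have supp_a: "{v. a v \<noteq> 0} \<subseteq> S" and nonneg: "\<And>v. 0 \<le> a v"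
    using assms(3) by (auto simp: closed_simplex_def)
  have "proj_pt L a \<in> cplx_points (NSimp X L)"
    using proj_pt_in_cplx_points nerve.closed_simplex_subset_cplx_points[OF assms(1)] assms(2,3) by blast
  moreover have "{w. proj_pt L a w \<noteq> 0} \<subseteq> (\<lambda>v. restrict v L) ` S"
    using proj_pt_support[OF finite_subset[OF supp_a fin] nonneg] supp_a by auto
  ultimately show ?thesis using fin by (intro cplx_points_in_closed_simplex) auto
qed

lemma continuous_map_proj_pt:
  assumes LM: "L \<subseteq> M"
  shows "continuous_map (Ncplx X M) (Ncplx X L) (proj_pt L)"
  unfolding continuous_map_def
proof (intro conjI allI impI)
  show "proj_pt L \<in> topspace (Ncplx X M) \<rightarrow> topspace (Ncplx X L)"
    using proj_pt_in_cplx_points[OF _ LM] by auto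
  fix U assume U: "openin (Ncplx X L) U"
  show "openin (Ncplx X M) {a \<in> topspace (Ncplx X M). proj_pt L a \<in> U}"
    unfolding openin_Ncplx
  proof (intro conjI allI impI)
    fix S assume S: "NSimp X M S"
    let ?T = "subtopology (powertop_real UNIV) (closed_simplex S)"
    have fin: "finite S" using S by (rule nerve.simplex_finite)
    have "continuous_map ?T (powertop_real UNIV) (\<lambda>a w. sum a {v \<in> S. restrict v L = w})"
      unfolding continuous_map_componentwise_UNIV using fin
      by (auto intro!: continuous_map_sum continuous_map_from_subtopology continuous_map_product_projection)
    moreover have "(\<lambda>w. sum a {v \<in> S. restrict v L = w}) = proj_pt L a" if "a \<in> topspace ?T" for a
      using that fin by (intro ext proj_pt_eq_sum[symmetric]) (auto simp: closed_simplex_def)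
    ultimately have "continuous_map ?T (powertop_real UNIV) (proj_pt L)"
      by (rule continuous_map_eq)
    then have "continuous_map ?T (Ncplx X L) (proj_pt L)"
      unfolding Ncplx_def using proj_pt_in_closed_simplex[OF S LM]
      by (intro nerve.continuous_map_into_weak_cplx_topology[OF NSimp_restrict_image[OF S LM]]) auto
    then have "openin ?T {a \<in> topspace ?T. proj_pt L a \<in> U}"
      using U by (rule openin_continuous_map_preimage)
    moreover have "{a \<in> topspace ?T. proj_pt L a \<in> U} =
        {a \<in> topspace (Ncplx X M). proj_pt L a \<in> U} \<inter> closed_simplex S"
      using nerve.closed_simplex_subset_cplx_points[OF S] by auto
    ultimately show "openin ?T ({a \<in> topspace (Ncplx X M). proj_pt L a \<in> U} \<inter> closed_simplex S)"
      by simp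
  qed auto
qed

lemma convex_comb_in_cplx_points:
  assumes a: "a \<in> cplx_points (NSimp X L)" and b: "b \<in> cplx_points (NSimp X L)"
    and t: "0 \<le> t" "t \<le> 1" and x: "x \<in> topspace X"
    and xa: "\<And>v. a v \<noteq> 0 \<Longrightarrow> x \<in> wedge X L v" and xb: "\<And>v. b v \<noteq> 0 \<Longrightarrow> x \<in> wedge X L v"
  shows "(\<lambda>v. (1 - t) * a v + t * b v) \<in> cplx_points (NSimp X L)"
proof -
  note A = cplx_points_NSimpD[OF a] and B = cplx_points_NSimpD[OF b]
  let ?c = "\<lambda>v. (1 - t) * a v + t * b v"
  let ?T = "{v. a v \<noteq> 0} \<union> {v. b v \<noteq> 0}"
  have T: "finite ?T" using A(1) B(1) by simp
  have supp: "{v. ?c v \<noteq> 0} \<subseteq> ?T" by auto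
  have "sum a ?T = sum a {v. a v \<noteq> 0}" "sum b ?T = sum b {v. b v \<noteq> 0}"
    using T by (intro sum.mono_neutral_right; auto)+
  then have "sum a ?T = 1" "sum b ?T = 1" using A(5) B(5) by simp_all
  moreover have "sum ?c {v. ?c v \<noteq> 0} = sum ?c ?T" using T supp by (intro sum.mono_neutral_left) auto
  moreover have "sum ?c ?T = (1 - t) * sum a ?T + t * sum b ?T" by (simp add: sum.distrib sum_distrib_left)
  ultimately have "sum ?c {v. ?c v \<noteq> 0} = 1" by simp
  moreover have "0 \<le> ?c v" for v using A(4) B(4) t by simp
  ultimately show ?thesis
    using finite_subset[OF supp T] supp A(3) B(3) xa xb x by (intro cplx_points_NSimpI) blast+
qed


section \<open>Extending points of a nerve by a partition of unity\<close>

lemma bij_betw_PiE_extensions: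
  assumes "N \<subseteq> N'" "w \<in> PiE N T"
  shows "bij_betw (\<lambda>u \<alpha>. if \<alpha> \<in> N then w \<alpha> else u \<alpha>) (PiE (N' - N) T) {v \<in> PiE N' T. restrict v N = w}"
proof (rule bij_betw_byWitness[where f'="\<lambda>v. restrict v (N' - N)"])
  show "\<forall>u\<in>PiE (N' - N) T. restrict (\<lambda>\<alpha>. if \<alpha> \<in> N then w \<alpha> else u \<alpha>) (N' - N) = u"
    by (auto simp: PiE_iff extensional_def fun_eq_iff)
  show "\<forall>v\<in>{v \<in> PiE N' T. restrict v N = w}. (\<lambda>\<alpha>. if \<alpha> \<in> N then w \<alpha> else restrict v (N' - N) \<alpha>) = v"
    using assms(1) by (auto simp: PiE_iff extensional_def fun_eq_iff)
  show "(\<lambda>u \<alpha>. if \<alpha> \<in> N then w \<alpha> else u \<alpha>) ` PiE (N' - N) T \<subseteq> {v \<in> PiE N' T. restrict v N = w}"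
    using assms by (auto simp: PiE_iff extensional_def fun_eq_iff)
  show "(\<lambda>v. restrict v (N' - N)) ` {v \<in> PiE N' T. restrict v N = w} \<subseteq> PiE (N' - N) T"
    by auto
qed

locale normal_cover_family =
  fixes X :: "'a topology" and \<A> :: "'a set set set" and \<phi> :: "'a set set \<Rightarrow> 'a set \<Rightarrow> 'a \<Rightarrow> real"
  assumes normal_covers: "\<forall>\<alpha>\<in>\<A>. normal_cover X \<alpha> (\<phi> \<alpha>)"
begin

lemma closedin_cover_member: "\<alpha> \<in> \<A> \<Longrightarrow> V \<in> \<alpha> \<Longrightarrow> closedin X V"
  using normal_covers by (simp add: normal_cover_def)

lemma cover_member_subset: "\<alpha> \<in> \<A> \<Longrightarrow> V \<in> \<alpha> \<Longrightarrow> V \<subseteq> topspace X"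
  using closedin_cover_member closedin_subset by blast

lemma continuous_map_phi: "\<alpha> \<in> \<A> \<Longrightarrow> V \<in> \<alpha> \<Longrightarrow> continuous_map X euclideanreal (\<phi> \<alpha> V)"
  using normal_covers by (simp add: normal_cover_def)

lemma phi_nonneg: "\<alpha> \<in> \<A> \<Longrightarrow> V \<in> \<alpha> \<Longrightarrow> x \<in> topspace X \<Longrightarrow> 0 \<le> \<phi> \<alpha> V x"
  using normal_covers by (simp add: normal_cover_def)

lemma phi_nonzero_imp_mem:
  assumes "\<alpha> \<in> \<A>" "V \<in> \<alpha>" "x \<in> topspace X" "\<phi> \<alpha> V x \<noteq> 0"
  shows "x \<in> V"
proof -
  have "x \<in> {x \<in> topspace X. \<phi> \<alpha> V x > 0}"
    using phi_nonneg[OF assms(1-3)] assms(3,4) by simp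
  also have "\<dots> \<subseteq> X closure_of {x \<in> topspace X. \<phi> \<alpha> V x > 0}" by (rule closure_of_subset) auto
  also have "\<dots> \<subseteq> X interior_of V" using normal_covers assms(1,2) by (simp add: normal_cover_def)
  also have "\<dots> \<subseteq> V" by (rule interior_of_subset)
  finally show ?thesis .
qed

lemma finite_members_containing:
  assumes "\<alpha> \<in> \<A>" "x \<in> topspace X"
  shows "finite {V\<in>\<alpha>. x \<in> V}"
proof -
  have "locally_finite_in X \<alpha>" using normal_covers assms(1) by (simp add: normal_cover_def)
  then obtain W where "x \<in> W" "finite {V \<in> \<alpha>. V \<inter> W \<noteq> {}}"
    using assms(2) unfolding locally_finite_in_def by blast
  moreover have "{V\<in>\<alpha>. x \<in> V} \<subseteq> {V \<in> \<alpha>. V \<inter> W \<noteq> {}}" using \<open>x \<in> W\<close> by auto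
  ultimately show ?thesis using finite_subset by blast
qed

lemma sum_phi_members_containing:
  assumes "\<alpha> \<in> \<A>" "x \<in> topspace X"
  shows "(\<Sum>V\<in>{V\<in>\<alpha>. x \<in> V}. \<phi> \<alpha> V x) = 1"
proof -
  have "(\<Sum>V\<in>{V\<in>\<alpha>. x \<in> V}. \<phi> \<alpha> V x) = (\<Sum>V\<in>{V\<in>\<alpha>. \<phi> \<alpha> V x \<noteq> 0}. \<phi> \<alpha> V x)"
    using finite_members_containing[OF assms] phi_nonzero_imp_mem[OF assms(1) _ assms(2)]
    by (intro sum.mono_neutral_right) auto
  also have "\<dots> = 1" using normal_covers assms by (simp add: normal_cover_def)
  finally show ?thesis .
qed

lemma nbhd_members_contain_point:
  assumes "\<alpha> \<in> \<A>" "x \<in> topspace X"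
  obtains W where "openin X W" "x \<in> W" "\<And>y V. y \<in> W \<Longrightarrow> V \<in> \<alpha> \<Longrightarrow> y \<in> V \<Longrightarrow> x \<in> V"
proof -
  have "locally_finite_in X \<alpha>" using normal_covers assms(1) by (simp add: normal_cover_def)
  then obtain N where N: "openin X N" "x \<in> N" "finite {V \<in> \<alpha>. V \<inter> N \<noteq> {}}"
    using assms(2) unfolding locally_finite_in_def by blast
  let ?F = "{V \<in> \<alpha>. V \<inter> N \<noteq> {} \<and> x \<notin> V}"
  have "closedin X (\<Union>?F)"
    using N(3) closedin_cover_member[OF assms(1)] by (intro closedin_Union) (auto elim: finite_subset[rotated])
  then have "openin X (N - \<Union>?F)" by (rule openin_diff[OF N(1)])
  moreover have "x \<in> N - \<Union>?F" using N(2) by auto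
  ultimately show thesis by (rule that) auto
qed

lemma nbhd_members_contain_point_finite:
  assumes "finite L" "L \<subseteq> \<A>" "x \<in> topspace X"
  obtains W where "openin X W" "x \<in> W" "\<And>y \<alpha> V. y \<in> W \<Longrightarrow> \<alpha> \<in> L \<Longrightarrow> V \<in> \<alpha> \<Longrightarrow> y \<in> V \<Longrightarrow> x \<in> V"
  using assms(1,2)
proof (induction L arbitrary: thesis rule: finite_induct)
  case empty
  show ?case by (rule empty.prems(1)[OF openin_topspace assms(3)]) auto
next
  case (insert \<alpha> L)
  obtain W1 where W1: "openin X W1" "x \<in> W1" "\<And>y \<beta> V. y \<in> W1 \<Longrightarrow> \<beta> \<in> L \<Longrightarrow> V \<in> \<beta> \<Longrightarrow> y \<in> V \<Longrightarrow> x \<in> V"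
    using insert.IH insert.prems(2) by blast
  obtain W2 where W2: "openin X W2" "x \<in> W2" "\<And>y V. y \<in> W2 \<Longrightarrow> V \<in> \<alpha> \<Longrightarrow> y \<in> V \<Longrightarrow> x \<in> V"
    using nbhd_members_contain_point[of \<alpha> x] insert.prems(2) assms(3) by blast
  show ?case
    by (rule insert.prems(1)[of "W1 \<inter> W2"]) (use W1 W2 in auto)
qed

definition carried_at :: "'a set set set \<Rightarrow> 'a pt \<Rightarrow> 'a \<Rightarrow> bool" where
  "carried_at L0 a x \<longleftrightarrow> x \<in> topspace X \<and> (\<forall>w. a w \<noteq> 0 \<longrightarrow> w \<in> PiE L0 (\<lambda>\<alpha>. \<alpha>) \<and> x \<in> wedge X L0 w)"

text \<open>The new coordinates are weighted by the partition of unity at \<open>x\<close>; as these weights sum to 1,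
  the extensions to different \<open>N\<close> are compatible with the projections.\<close>
definition extend_pt :: "'a set set set \<Rightarrow> 'a pt \<Rightarrow> 'a \<Rightarrow> 'a set set set \<Rightarrow> 'a pt" where
  "extend_pt L0 a x N =
     (\<lambda>v. if v \<in> PiE N (\<lambda>\<alpha>. \<alpha>) then a (restrict v L0) * (\<Prod>\<alpha>\<in>N - L0. \<phi> \<alpha> (v \<alpha>) x) else 0)"

lemma extend_pt_nonzeroD:
  assumes "N \<subseteq> \<A>" "finite N" "L0 \<subseteq> N" "carried_at L0 a x" "extend_pt L0 a x N v \<noteq> 0"
  shows "v \<in> PiE N (\<lambda>\<alpha>. {V\<in>\<alpha>. x \<in> V})"
proof -
  have v: "v \<in> PiE N (\<lambda>\<alpha>. \<alpha>)" and a: "a (restrict v L0) \<noteq> 0"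
    and prod: "(\<Prod>\<alpha>\<in>N - L0. \<phi> \<alpha> (v \<alpha>) x) \<noteq> 0"
    using assms(5) by (auto simp: extend_pt_def split: if_splits)
  have x: "x \<in> topspace X" using assms(4) by (simp add: carried_at_def)
  have "x \<in> v \<alpha>" if "\<alpha> \<in> N" for \<alpha>
  proof (cases "\<alpha> \<in> L0")
    case True
    then show ?thesis using a assms(4) by (auto simp: carried_at_def wedge_iff)
  next
    case False
    then have "\<phi> \<alpha> (v \<alpha>) x \<noteq> 0" using prod that assms(2) by auto
    then show ?thesis using phi_nonzero_imp_mem v that assms(1) x by (auto simp: PiE_iff)
  qed
  then show ?thesis using v by (auto simp: PiE_iff)
qed

lemma extend_pt_nonzero_Nverts:
  assumes "N \<subseteq> \<A>" "finite N" "L0 \<subseteq> N" "carried_at L0 a x" "extend_pt L0 a x N v \<noteq> 0"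
  shows "v \<in> Nverts X N" "x \<in> wedge X N v"
proof -
  have "v \<in> PiE N (\<lambda>\<alpha>. {V\<in>\<alpha>. x \<in> V})" by (rule extend_pt_nonzeroD[OF assms])
  moreover have "x \<in> topspace X" using assms(4) by (simp add: carried_at_def)
  ultimately show w: "x \<in> wedge X N v" by (auto simp: wedge_iff PiE_iff)
  then show "v \<in> Nverts X N"
    using extend_pt_nonzeroD[OF assms] unfolding Nverts_def by (auto simp: PiE_iff)
qed

lemma sum_extend_pt_extensions:
  assumes N': "N' \<subseteq> \<A>" "finite N'" and LN: "L0 \<subseteq> N" "N \<subseteq> N'" and x: "x \<in> topspace X"
    and w: "w \<in> PiE N (\<lambda>\<alpha>. {V\<in>\<alpha>. x \<in> V})"
  shows "(\<Sum>v\<in>{v \<in> PiE N' (\<lambda>\<alpha>. {V\<in>\<alpha>. x \<in> V}). restrict v N = w}. extend_pt L0 a x N' v) =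
    extend_pt L0 a x N w"
proof -
  let ?T = "\<lambda>\<alpha>. {V\<in>\<alpha>. x \<in> V}"
  let ?m = "\<lambda>u \<alpha>. if \<alpha> \<in> N then w \<alpha> else u \<alpha>"
  have fin: "finite N" using N'(2) LN(2) by (rule finite_subset[rotated])
  have extend_m: "extend_pt L0 a x N' (?m u) = extend_pt L0 a x N w * (\<Prod>\<alpha>\<in>N' - N. \<phi> \<alpha> (u \<alpha>) x)"
    if u: "u \<in> PiE (N' - N) ?T" for u
  proof -
    have "?m u \<in> PiE N' (\<lambda>\<alpha>. \<alpha>)" "w \<in> PiE N (\<lambda>\<alpha>. \<alpha>)"
      using u w LN(2) by (auto simp: PiE_iff extensional_def)
    moreover have "restrict (?m u) L0 = restrict w L0" using LN(1) by (auto simp: restrict_def fun_eq_iff)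
    moreover have "N' - L0 = (N - L0) \<union> (N' - N)" using LN by auto
    then have "(\<Prod>\<alpha>\<in>N' - L0. \<phi> \<alpha> (?m u \<alpha>) x) =
        (\<Prod>\<alpha>\<in>N - L0. \<phi> \<alpha> (w \<alpha>) x) * (\<Prod>\<alpha>\<in>N' - N. \<phi> \<alpha> (u \<alpha>) x)"
      using fin N'(2) by (simp add: prod.union_disjoint Diff_Int_distrib2)
    ultimately show ?thesis by (simp add: extend_pt_def mult.assoc)
  qed
  have "(\<Sum>v\<in>{v \<in> PiE N' ?T. restrict v N = w}. extend_pt L0 a x N' v) =
      (\<Sum>u\<in>PiE (N' - N) ?T. extend_pt L0 a x N' (?m u))"
    by (rule sum.reindex_bij_betw[OF bij_betw_PiE_extensions[OF LN(2) w], symmetric])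
  also have "\<dots> = extend_pt L0 a x N w * (\<Sum>u\<in>PiE (N' - N) ?T. \<Prod>\<alpha>\<in>N' - N. \<phi> \<alpha> (u \<alpha>) x)"
    by (simp add: extend_m sum_distrib_left)
  also have "(\<Sum>u\<in>PiE (N' - N) ?T. \<Prod>\<alpha>\<in>N' - N. \<phi> \<alpha> (u \<alpha>) x) = (\<Prod>\<alpha>\<in>N' - N. \<Sum>V\<in>?T \<alpha>. \<phi> \<alpha> V x)"
    using N' finite_members_containing[OF _ x] by (intro prod_sum_PiE[symmetric]) auto
  also have "\<dots> = 1"
    using N'(1) sum_phi_members_containing[OF _ x] by (intro prod.neutral) auto
  finally show ?thesis by (simp only: mult_1_right)
qed

lemma proj_extend_pt:
  assumes N': "N' \<subseteq> \<A>" "finite N'" and LN: "L0 \<subseteq> N" "N \<subseteq> N'" and a: "carried_at L0 a x"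
  shows "proj_pt N (extend_pt L0 a x N') = extend_pt L0 a x N"
proof
  fix w
  let ?T = "\<lambda>\<alpha>. {V\<in>\<alpha>. x \<in> V}"
  have x: "x \<in> topspace X" using a by (simp add: carried_at_def)
  have N: "N \<subseteq> \<A>" "finite N" using N' LN(2) by (auto intro: finite_subset)
  have "finite (PiE N' ?T)" using N' finite_members_containing[OF _ x] by (intro finite_PiE) auto
  moreover have "{v. extend_pt L0 a x N' v \<noteq> 0} \<subseteq> PiE N' ?T"
    using extend_pt_nonzeroD[OF N' order.trans[OF LN] a] by blast
  ultimately have "proj_pt N (extend_pt L0 a x N') w =
      (\<Sum>v\<in>{v \<in> PiE N' ?T. restrict v N = w}. extend_pt L0 a x N' v)"
    by (rule proj_pt_eq_sum)
  also have "\<dots> = extend_pt L0 a x N w"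
  proof (cases "w \<in> PiE N ?T")
    case True
    then show ?thesis by (rule sum_extend_pt_extensions[OF N' LN x])
  next
    case False
    then have no_extension: "{v \<in> PiE N' ?T. restrict v N = w} = {}"
      using LN(2) by (auto simp: PiE_iff)
    have "extend_pt L0 a x N w = 0"
      using False extend_pt_nonzeroD[OF N LN(1) a] by blast
    then show ?thesis unfolding no_extension by simp
  qed
  finally show "proj_pt N (extend_pt L0 a x N') w = extend_pt L0 a x N w" .
qed

lemma extend_pt_self: "carried_at L0 a x \<Longrightarrow> extend_pt L0 a x L0 = a"
  by (auto simp: extend_pt_def carried_at_def PiE_iff extensional_restrict fun_eq_iff)

lemma finite_extend_pt_support:
  assumes "N \<subseteq> \<A>" "finite N" "L0 \<subseteq> N" "carried_at L0 a x"
  shows "finite {v. extend_pt L0 a x N v \<noteq> 0}"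
proof -
  have x: "x \<in> topspace X" using assms(4) by (simp add: carried_at_def)
  have "finite (PiE N (\<lambda>\<alpha>. {V\<in>\<alpha>. x \<in> V}))"
    using assms(1,2) finite_members_containing[OF _ x] by (intro finite_PiE) auto
  then show ?thesis by (rule finite_subset[rotated]) (use extend_pt_nonzeroD[OF assms] in blast)
qed

lemma extend_pt_in_cplx_points:
  assumes N: "N \<subseteq> \<A>" "finite N" and LN: "L0 \<subseteq> N" and a: "carried_at L0 a x"
    "\<And>w. 0 \<le> a w" "finite {w. a w \<noteq> 0}" "sum a {w. a w \<noteq> 0} = 1"
  shows "extend_pt L0 a x N \<in> cplx_points (NSimp X N)"
proof (rule cplx_points_NSimpI)
  have x: "x \<in> topspace X" using a(1) by (simp add: carried_at_def)
  show "x \<in> topspace X" by (rule x)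
  show "0 \<le> extend_pt L0 a x N v" for v
    unfolding extend_pt_def using N(1) x a(2) phi_nonneg
    by (auto intro!: mult_nonneg_nonneg prod_nonneg simp: PiE_iff subset_eq)
  show fin: "finite {v. extend_pt L0 a x N v \<noteq> 0}"
    by (rule finite_extend_pt_support[OF N LN a(1)])
  have "proj_pt L0 (extend_pt L0 a x N) = a"
    using proj_extend_pt[OF N order_refl LN a(1)] extend_pt_self[OF a(1)] by simp
  then show "sum (extend_pt L0 a x N) {v. extend_pt L0 a x N v \<noteq> 0} = 1"
    using sum_proj_pt[OF fin, of L0] a(4) by simp
  show "{v. extend_pt L0 a x N v \<noteq> 0} \<subseteq> Nverts X N"
    using extend_pt_nonzero_Nverts(1)[OF N LN a(1)] by blast
  show "x \<in> wedge X N v" if "extend_pt L0 a x N v \<noteq> 0" for v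
    using extend_pt_nonzero_Nverts(2)[OF N LN a(1) that] .
qed

lemma proj_extend_pt_union:
  assumes "M \<union> L0 \<subseteq> \<A>" "finite (M \<union> L0)" "N \<subseteq> M" "carried_at L0 a x"
  shows "proj_pt N (extend_pt L0 a x (M \<union> L0)) = proj_pt N (extend_pt L0 a x (N \<union> L0))"
proof -
  have "finite {v. extend_pt L0 a x (M \<union> L0) v \<noteq> 0}"
    by (rule finite_extend_pt_support[OF assms(1,2) _ assms(4)]) auto
  then have "proj_pt N (extend_pt L0 a x (M \<union> L0)) = proj_pt N (proj_pt (N \<union> L0) (extend_pt L0 a x (M \<union> L0)))"
    by (rule proj_pt_proj_pt[symmetric, rotated]) auto
  also have "proj_pt (N \<union> L0) (extend_pt L0 a x (M \<union> L0)) = extend_pt L0 a x (N \<union> L0)"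
    using assms(3) by (intro proj_extend_pt[OF assms(1,2) _ _ assms(4)]) auto
  finally show ?thesis .
qed

lemma wedge_pt_proj_extend_pt:
  assumes "N \<union> L0 \<subseteq> \<A>" "finite (N \<union> L0)" "carried_at L0 a x"
  shows "x \<in> wedge_pt X N (proj_pt N (extend_pt L0 a x (N \<union> L0)))"
  unfolding wedge_pt_iff
proof (intro conjI allI impI)
  show "x \<in> topspace X" using assms(3) by (simp add: carried_at_def)
  fix w assume "proj_pt N (extend_pt L0 a x (N \<union> L0)) w \<noteq> 0"
  then obtain v where v: "extend_pt L0 a x (N \<union> L0) v \<noteq> 0" "restrict v N = w"
    by (rule proj_pt_nonzeroD)
  have "x \<in> wedge X (N \<union> L0) v"
    by (rule extend_pt_nonzero_Nverts(2)[OF assms(1,2) _ assms(3) v(1)]) auto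
  then show "x \<in> wedge X N w" using wedge_restrict[of x X "N \<union> L0" v N] v(2) by auto
qed

end

text \<open>\<open>N\<^sub>\<emptyset>\<close> has the single vertex \<open>\<lambda>_. undefined\<close>; \<open>p\<^sub>L(x)\<close> is the extension of the point at that vertex.\<close>
definition empty_vertex_pt :: "'a pt" where
  "empty_vertex_pt = (\<lambda>w. if w = (\<lambda>_. undefined) then 1 else 0)"

context normal_cover_family
begin

lemma carried_at_empty_vertex_pt: "x \<in> topspace X \<Longrightarrow> carried_at {} empty_vertex_pt x"
  by (auto simp: carried_at_def empty_vertex_pt_def wedge_iff)

lemma p_lam_eq_extend_pt:
  assumes "L \<subseteq> \<A>" "finite L" "x \<in> topspace X"
  shows "p_lam X \<phi> L x = extend_pt {} empty_vertex_pt x L"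
proof
  fix v
  show "p_lam X \<phi> L x v = extend_pt {} empty_vertex_pt x L v"
  proof (cases "extend_pt {} empty_vertex_pt x L v = 0")
    case False
    then have "v \<in> Nverts X L"
      using extend_pt_nonzero_Nverts(1)[OF assms(1,2) empty_subsetI carried_at_empty_vertex_pt[OF assms(3)]]
      by blast
    then show ?thesis by (simp add: p_lam_def extend_pt_def empty_vertex_pt_def Nverts_def restrict_def)
  next
    case True
    then show ?thesis by (auto simp: p_lam_def extend_pt_def empty_vertex_pt_def Nverts_def restrict_def)
  qed
qed

lemma p_lam_in_cplx_points:
  assumes "L \<subseteq> \<A>" "finite L" "x \<in> topspace X"
  shows "p_lam X \<phi> L x \<in> cplx_points (NSimp X L)"
proof -
  have "{w. empty_vertex_pt w \<noteq> 0} = {\<lambda>_. undefined}" by (auto simp: empty_vertex_pt_def)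
  then show ?thesis
    unfolding p_lam_eq_extend_pt[OF assms]
    using carried_at_empty_vertex_pt[OF assms(3)]
    by (intro extend_pt_in_cplx_points[OF assms(1,2)]) (auto simp: empty_vertex_pt_def)
qed

lemma proj_p_lam:
  assumes "M \<subseteq> \<A>" "finite M" "L \<subseteq> M" "x \<in> topspace X"
  shows "proj_pt L (p_lam X \<phi> M x) = p_lam X \<phi> L x"
proof -
  have "L \<subseteq> \<A>" "finite L" using assms by (auto intro: finite_subset)
  then show ?thesis
    unfolding p_lam_eq_extend_pt[OF assms(1,2,4)] p_lam_eq_extend_pt[OF \<open>L \<subseteq> \<A>\<close> \<open>finite L\<close> assms(4)]
    using carried_at_empty_vertex_pt[OF assms(4)] by (intro proj_extend_pt[OF assms(1,2)]) (use assms(3) in auto)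
qed

lemma p_lam_nonzero_wedge:
  assumes "L \<subseteq> \<A>" "finite L" "x \<in> topspace X" "p_lam X \<phi> L x v \<noteq> 0"
  shows "x \<in> wedge X L v"
  using extend_pt_nonzero_Nverts(2)[OF assms(1,2) empty_subsetI carried_at_empty_vertex_pt[OF assms(3)]]
    assms(4) p_lam_eq_extend_pt[OF assms(1-3)] by simp

end

section \<open>The inverse limit \<open>N\<^sub>\<infinity>\<close> and the projection \<open>\<pi>\<close>\<close>

lemma topspace_Ninf [simp]: "topspace (Ninf X \<A>) = Ninf_set X \<A>"
  unfolding Ninf_def by (auto simp: Ninf_set_def)

lemma Ninf_setD:
  assumes "z \<in> Ninf_set X \<A>"
  shows "\<And>L. L \<in> Lambda \<A> \<Longrightarrow> z L \<in> cplx_points (NSimp X L)"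
    "\<And>L M. L \<in> Lambda \<A> \<Longrightarrow> M \<in> Lambda \<A> \<Longrightarrow> L \<subseteq> M \<Longrightarrow> proj_pt L (z M) = z L"
    "z \<in> extensional (Lambda \<A>)"
  using assms by (auto simp: Ninf_set_def PiE_iff)

lemma Ninf_set_nonzero_lift:
  assumes "z \<in> Ninf_set X \<A>" "L \<in> Lambda \<A>" "M \<in> Lambda \<A>" "L \<subseteq> M" "z L v \<noteq> 0"
  obtains u where "z M u \<noteq> 0" "restrict u L = v"
  using Ninf_setD(2)[OF assms(1-4)] assms(5) proj_pt_nonzeroD by metis

lemma Ninf_set_nonzero_restrict:
  assumes z: "z \<in> Ninf_set X \<A>" and LM: "L \<in> Lambda \<A>" "M \<in> Lambda \<A>" "L \<subseteq> M" and u: "z M u \<noteq> 0"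
  shows "z L (restrict u L) \<noteq> 0"
proof -
  note zM = cplx_points_NSimpD[OF Ninf_setD(1)[OF z LM(2)]]
  have "restrict u L \<in> {w. proj_pt L (z M) w \<noteq> 0}"
    using proj_pt_support[OF zM(1) zM(4)] u by auto
  then show ?thesis using Ninf_setD(2)[OF z LM] by simp
qed

lemma continuous_map_Ninf_coord: "L \<in> Lambda \<A> \<Longrightarrow> continuous_map (Ninf X \<A>) (Ncplx X L) (\<lambda>z. z L)"
  unfolding Ninf_def by (intro continuous_map_from_subtopology continuous_map_product_projection)

lemma openin_Ninf_carrier_star:
  assumes z0: "z0 \<in> Ninf_set X \<A>" and L: "L \<in> Lambda \<A>"
  shows "openin (Ninf X \<A>) {z \<in> Ninf_set X \<A>. \<forall>v. z0 L v \<noteq> 0 \<longrightarrow> z L v \<noteq> 0}"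
proof -
  let ?Pos = "{a \<in> cplx_points (NSimp X L). \<forall>v\<in>{v. z0 L v \<noteq> 0}. 0 < a v}"
  have "openin (Ninf X \<A>) {z \<in> topspace (Ninf X \<A>). z L \<in> ?Pos}"
    using continuous_map_Ninf_coord[OF L] openin_Ncplx_positive[OF cplx_points_NSimpD(1)[OF Ninf_setD(1)[OF z0 L]]]
    by (rule openin_continuous_map_preimage)
  moreover have "z L \<in> ?Pos \<longleftrightarrow> (\<forall>v. z0 L v \<noteq> 0 \<longrightarrow> z L v \<noteq> 0)" if "z \<in> Ninf_set X \<A>" for z
    using Ninf_setD(1)[OF that L] cplx_points_NSimpD(4)[OF Ninf_setD(1)[OF that L]]
    by (auto simp: order_less_le)
  then have "{z \<in> topspace (Ninf X \<A>). z L \<in> ?Pos} = {z \<in> Ninf_set X \<A>. \<forall>v. z0 L v \<noteq> 0 \<longrightarrow> z L v \<noteq> 0}"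
    by auto
  ultimately show ?thesis by simp
qed

lemma closedin_Ninf_set: "closedin (product_topology (Ncplx X) (Lambda \<A>)) (Ninf_set X \<A>)"
proof -
  let ?P = "product_topology (Ncplx X) (Lambda \<A>)"
  let ?E = "\<lambda>(L, M). {z \<in> topspace ?P. proj_pt L (z M) = z L}"
  let ?Q = "{(L, M). L \<in> Lambda \<A> \<and> M \<in> Lambda \<A> \<and> L \<subseteq> M}"
  have "closedin ?P (?E (L, M))" if "L \<in> Lambda \<A>" "M \<in> Lambda \<A>" "L \<subseteq> M" for L M
  proof -
    have "continuous_map ?P (Ncplx X L) (\<lambda>z. proj_pt L (z M))"
      using continuous_map_compose[OF continuous_map_product_projection[of M "Lambda \<A>" "Ncplx X", OF that(2)]
          continuous_map_proj_pt[OF that(3)]]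
      by (simp add: o_def)
    moreover have "continuous_map ?P (Ncplx X L) (\<lambda>z. z L)"
      by (rule continuous_map_product_projection[OF that(1)])
    ultimately have "closedin ?P {z \<in> topspace ?P. proj_pt L (z M) = z L}"
      by (rule closedin_continuous_maps_eq[OF Hausdorff_Ncplx])
    then show ?thesis by simp
  qed
  moreover have "?Q \<noteq> {}" by (auto simp: Lambda_def)
  moreover have "Ninf_set X \<A> = \<Inter>(?E ` ?Q)"
    using \<open>?Q \<noteq> {}\<close> by (auto simp: Ninf_set_def)
  ultimately show ?thesis by (auto intro!: closedin_Inter)
qed


locale complete_cover_family = normal_cover_family +
  assumes Hausdorff: "Hausdorff_space X"
    and condI: "\<forall>U x. openin X U \<and> x \<in> U \<longrightarrow> (\<exists>\<alpha>\<in>\<A>. \<Union>{V\<in>\<alpha>. x \<in> V} \<subseteq> U)"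
    and condII: "\<forall>f. (\<forall>\<alpha>\<in>\<A>. f \<alpha> \<in> \<alpha>) \<and>
                    (\<forall>L. finite L \<and> L \<noteq> {} \<and> L \<subseteq> \<A> \<longrightarrow> \<Inter>(f ` L) \<noteq> {})
                  \<longrightarrow> \<Inter>(f ` \<A>) \<noteq> {}"
begin

lemma cover_star_subset:
  assumes "openin X U" "x \<in> U"
  obtains \<alpha> where "\<alpha> \<in> \<A>" "\<And>V. V \<in> \<alpha> \<Longrightarrow> x \<in> V \<Longrightarrow> V \<subseteq> U"
proof -
  obtain \<alpha> where \<alpha>: "\<alpha> \<in> \<A>" "\<Union>{V\<in>\<alpha>. x \<in> V} \<subseteq> U" using condI assms by meson
  show thesis
  proof (rule that[OF \<alpha>(1)])
    fix V assume "V \<in> \<alpha>" "x \<in> V"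
    then show "V \<subseteq> U" using \<alpha>(2) by blast
  qed
qed

lemma wedge_pt_Ninf_unique:
  assumes z: "z \<in> Ninf_set X \<A>"
    and x: "x \<in> topspace X" "\<forall>L\<in>Lambda \<A>. x \<in> wedge_pt X L (z L)"
    and x': "x' \<in> topspace X" "\<forall>L\<in>Lambda \<A>. x' \<in> wedge_pt X L (z L)"
  shows "x = x'"
proof (rule ccontr)
  assume "x \<noteq> x'"
  then obtain U U' where UU': "openin X U" "openin X U'" "x \<in> U" "x' \<in> U'" "disjnt U U'"
    using Hausdorff x(1) x'(1) unfolding Hausdorff_space_def by blast
  obtain \<alpha> where \<alpha>: "\<alpha> \<in> \<A>" "\<And>V. V \<in> \<alpha> \<Longrightarrow> x \<in> V \<Longrightarrow> V \<subseteq> U"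
    using cover_star_subset[OF UU'(1,3)] by blast
  obtain \<gamma> where \<gamma>: "\<gamma> \<in> \<A>" "\<And>V. V \<in> \<gamma> \<Longrightarrow> x' \<in> V \<Longrightarrow> V \<subseteq> U'"
    using cover_star_subset[OF UU'(2,4)] by blast
  have L: "{\<alpha>, \<gamma>} \<in> Lambda \<A>" using \<alpha>(1) \<gamma>(1) by (simp add: Lambda_def)
  note zL = cplx_points_NSimpD[OF Ninf_setD(1)[OF z L]]
  obtain w where w: "z {\<alpha>, \<gamma>} w \<noteq> 0" using zL(2) by blast
  then have "w \<in> Nverts X {\<alpha>, \<gamma>}" using zL(3) by blast
  then obtain q where q: "q \<in> wedge X {\<alpha>, \<gamma>} w" and "w \<alpha> \<in> \<alpha>" "w \<gamma> \<in> \<gamma>"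
    by (auto simp: Nverts_def PiE_iff)
  moreover have "x \<in> w \<alpha>" "x' \<in> w \<gamma>"
    using x(2) x'(2) L w by (auto simp: wedge_pt_iff wedge_iff)
  ultimately have "w \<alpha> \<subseteq> U" "w \<gamma> \<subseteq> U'" using \<alpha>(2) \<gamma>(2) by auto
  moreover have "q \<in> w \<alpha>" "q \<in> w \<gamma>" using q by (auto simp: wedge_iff)
  ultimately show False using UU'(5) by (auto simp: disjnt_def)
qed

lemma Ninf_set_thread:
  assumes z: "z \<in> Ninf_set X \<A>"
  obtains g where "\<And>L. L \<in> Lambda \<A> \<Longrightarrow> z L (restrict g L) \<noteq> 0"
proof -
  let ?T = "\<lambda>L. {w. z L w \<noteq> 0}"
  obtain g where g: "\<And>L. finite L \<Longrightarrow> L \<subseteq> \<A> \<Longrightarrow> restrict g L \<in> ?T L"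
  proof (rule inverse_limit_finite_nonempty[of \<A> ?T])
    fix L assume L: "finite L" "L \<subseteq> \<A>"
    then have zL: "z L \<in> cplx_points (NSimp X L)" by (intro Ninf_setD(1)[OF z]) (simp add: Lambda_def)
    show "finite (?T L)" "?T L \<noteq> {}" using cplx_points_NSimpD(1,2)[OF zL] by auto
    show "?T L \<subseteq> extensional L" using cplx_points_NSimpD(3)[OF zL] by (auto simp: Nverts_def PiE_iff)
  next
    fix L M w assume LM: "finite M" "M \<subseteq> \<A>" "L \<subseteq> M" and "w \<in> ?T M"
    moreover have "finite L" using LM finite_subset by blast
    ultimately show "restrict w L \<in> ?T L"
      using Ninf_set_nonzero_restrict[OF z, of L M w] by (simp add: Lambda_def)
  qed (rule that)
  show thesis using g by (intro that[of g]) (simp add: Lambda_def)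
qed

text \<open>Condition (I): if \<open>y \<in> \<Inter>\<^sub>\<alpha> g(\<alpha>)\<close> missed a vertex set \<open>v(\<beta>)\<close>, some cover \<open>\<gamma>\<close> would separate
  \<open>g(\<gamma>) \<ni> y\<close> from \<open>v(\<beta>)\<close>, although both are vertex sets of one simplex of \<open>z(L \<union> {\<gamma>})\<close>.\<close>
lemma thread_point_in_wedge_pt:
  assumes z: "z \<in> Ninf_set X \<A>" and g: "\<And>L. L \<in> Lambda \<A> \<Longrightarrow> z L (restrict g L) \<noteq> 0"
    and y: "y \<in> topspace X" "\<And>\<alpha>. \<alpha> \<in> \<A> \<Longrightarrow> y \<in> g \<alpha>" and L: "L \<in> Lambda \<A>"
  shows "y \<in> wedge_pt X L (z L)"
proof (rule ccontr)
  assume "y \<notin> wedge_pt X L (z L)"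
  then obtain v \<beta> where v: "z L v \<noteq> 0" "\<beta> \<in> L" "y \<notin> v \<beta>"
    using y(1) by (auto simp: wedge_pt_iff wedge_iff)
  have \<beta>: "\<beta> \<in> \<A>" "v \<beta> \<in> \<beta>"
    using v L cplx_points_NSimpD(3)[OF Ninf_setD(1)[OF z L]] by (auto simp: Lambda_def Nverts_def PiE_iff)
  have "openin X (topspace X - v \<beta>)" using closedin_cover_member[OF \<beta>] by blast
  then obtain \<gamma> where \<gamma>: "\<gamma> \<in> \<A>" "\<And>V. V \<in> \<gamma> \<Longrightarrow> y \<in> V \<Longrightarrow> V \<subseteq> topspace X - v \<beta>"
    using cover_star_subset y(1) v(3) by blast
  let ?M = "insert \<gamma> L"
  have M: "?M \<in> Lambda \<A>" using L \<gamma>(1) by (auto simp: Lambda_def)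
  obtain u where u: "z ?M u \<noteq> 0" "restrict u L = v"
    using Ninf_set_nonzero_lift[OF z L M _ v(1)] by blast
  obtain q where q: "\<And>t. z ?M t \<noteq> 0 \<Longrightarrow> q \<in> wedge X ?M t"
    using cplx_points_NSimpD(6)[OF Ninf_setD(1)[OF z M]] by blast
  have "q \<in> v \<beta>" using q[OF u(1)] u(2) v(2) by (auto simp: wedge_iff)
  moreover have "q \<in> g \<gamma>" using q[OF g[OF M]] by (auto simp: wedge_iff)
  moreover have "g \<gamma> \<in> \<gamma>"
    using cplx_points_NSimpD(3)[OF Ninf_setD(1)[OF z M]] g[OF M] by (auto simp: Nverts_def PiE_iff)
  then have "g \<gamma> \<subseteq> topspace X - v \<beta>" using \<gamma>(2) y(2)[OF \<gamma>(1)] by blast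
  ultimately show False by blast
qed

lemma wedge_pt_Ninf_exists:
  assumes z: "z \<in> Ninf_set X \<A>"
  obtains x where "x \<in> topspace X" "\<forall>L\<in>Lambda \<A>. x \<in> wedge_pt X L (z L)"
proof -
  obtain g where g: "\<And>L. L \<in> Lambda \<A> \<Longrightarrow> z L (restrict g L) \<noteq> 0"
    using Ninf_set_thread[OF z] by blast
  have g_vertex: "restrict g L \<in> Nverts X L" if "L \<in> Lambda \<A>" for L
    using cplx_points_NSimpD(3)[OF Ninf_setD(1)[OF z that]] g[OF that] by blast
  have g_member: "\<forall>\<alpha>\<in>\<A>. g \<alpha> \<in> \<alpha>"
  proof
    fix \<alpha> assume "\<alpha> \<in> \<A>"
    then have "restrict g {\<alpha>} \<in> Nverts X {\<alpha>}" by (intro g_vertex) (simp add: Lambda_def)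
    then show "g \<alpha> \<in> \<alpha>" by (auto simp: Nverts_def PiE_iff)
  qed
  moreover have "\<forall>L. finite L \<and> L \<noteq> {} \<and> L \<subseteq> \<A> \<longrightarrow> \<Inter>(g ` L) \<noteq> {}"
  proof (intro allI impI)
    fix L assume L: "finite L \<and> L \<noteq> {} \<and> L \<subseteq> \<A>"
    obtain q where "q \<in> wedge X L (restrict g L)"
      using g_vertex[of L] L by (auto simp: Lambda_def Nverts_def)
    then show "\<Inter>(g ` L) \<noteq> {}" by (auto simp: wedge_iff)
  qed
  ultimately have "\<Inter>(g ` \<A>) \<noteq> {}" using mp[OF spec[OF condII, of g]] by blast
  then obtain y where y: "\<And>\<alpha>. \<alpha> \<in> \<A> \<Longrightarrow> y \<in> g \<alpha>" by blast
  obtain x0 where "x0 \<in> topspace X"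
    using cplx_points_NSimpD(6)[OF Ninf_setD(1)[OF z, of "{}"]] by (auto simp: Lambda_def)
  then obtain \<alpha> where "\<alpha> \<in> \<A>"
    using condI[rule_format, OF conjI[OF openin_topspace]] by blast
  then have "y \<in> topspace X"
    using y g_member cover_member_subset by blast
  then show thesis
    using thread_point_in_wedge_pt[OF z g _ y] by (intro that) auto
qed

lemma piX_in_wedge_pt:
  assumes z: "z \<in> Ninf_set X \<A>"
  shows "piX X \<A> z \<in> topspace X" "\<And>L. L \<in> Lambda \<A> \<Longrightarrow> piX X \<A> z \<in> wedge_pt X L (z L)"
proof -
  obtain x where x: "x \<in> topspace X" "\<forall>L\<in>Lambda \<A>. x \<in> wedge_pt X L (z L)"
    using wedge_pt_Ninf_exists[OF z] by blast
  have "piX X \<A> z = x"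
    unfolding piX_def
  proof (rule the_equality)
    show "x \<in> topspace X \<and> (\<forall>L\<in>Lambda \<A>. x \<in> wedge_pt X L (z L))" using x by blast
    show "y = x" if "y \<in> topspace X \<and> (\<forall>L\<in>Lambda \<A>. y \<in> wedge_pt X L (z L))" for y
      using wedge_pt_Ninf_unique[OF z] x that by blast
  qed
  then show "piX X \<A> z \<in> topspace X" "\<And>L. L \<in> Lambda \<A> \<Longrightarrow> piX X \<A> z \<in> wedge_pt X L (z L)"
    using x by simp_all
qed

lemma piX_eqI:
  assumes "z \<in> Ninf_set X \<A>" "x \<in> topspace X" "\<And>L. L \<in> Lambda \<A> \<Longrightarrow> x \<in> wedge_pt X L (z L)"
  shows "piX X \<A> z = x"
  using wedge_pt_Ninf_unique[OF assms(1)] piX_in_wedge_pt[OF assms(1)] assms(2,3) by blast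

text \<open>Near \<open>z\<^sub>0\<close>, every vertex of \<open>z\<^sub>0({\<alpha>})\<close> stays a vertex of \<open>z({\<alpha>})\<close>, so \<open>\<pi> z\<close> and \<open>\<pi> z\<^sub>0\<close> lie in a
  common member of \<open>\<alpha>\<close>.\<close>
lemma continuous_map_piX: "continuous_map (Ninf X \<A>) X (piX X \<A>)"
  unfolding continuous_map_def
proof (intro conjI allI impI)
  show "piX X \<A> \<in> topspace (Ninf X \<A>) \<rightarrow> topspace X" using piX_in_wedge_pt(1) by auto
  fix U assume U: "openin X U"
  show "openin (Ninf X \<A>) {z \<in> topspace (Ninf X \<A>). piX X \<A> z \<in> U}"
    unfolding openin_subopen[of _ "{z \<in> topspace (Ninf X \<A>). piX X \<A> z \<in> U}"]
  proof
    fix z0 assume z0: "z0 \<in> {z \<in> topspace (Ninf X \<A>). piX X \<A> z \<in> U}"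
    then have z0N: "z0 \<in> Ninf_set X \<A>" by simp
    obtain \<alpha> where \<alpha>: "\<alpha> \<in> \<A>" "\<And>V. V \<in> \<alpha> \<Longrightarrow> piX X \<A> z0 \<in> V \<Longrightarrow> V \<subseteq> U"
      using cover_star_subset[OF U] z0 by blast
    have L: "{\<alpha>} \<in> Lambda \<A>" using \<alpha>(1) by (simp add: Lambda_def)
    note z0L = cplx_points_NSimpD[OF Ninf_setD(1)[OF z0N L]]
    let ?T = "{z \<in> Ninf_set X \<A>. \<forall>v. z0 {\<alpha>} v \<noteq> 0 \<longrightarrow> z {\<alpha>} v \<noteq> 0}"
    have "piX X \<A> z \<in> U" if z: "z \<in> ?T" for z
    proof -
      obtain v where v: "z0 {\<alpha>} v \<noteq> 0" using z0L(2) by blast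
      moreover have "z \<in> Ninf_set X \<A>" using z by simp
      ultimately have "piX X \<A> z \<in> v \<alpha>"
        using z piX_in_wedge_pt(2)[OF _ L] by (auto simp: wedge_pt_iff wedge_iff)
      moreover have "piX X \<A> z0 \<in> v \<alpha>"
        using piX_in_wedge_pt(2)[OF z0N L] v by (auto simp: wedge_pt_iff wedge_iff)
      moreover have "v \<alpha> \<in> \<alpha>" using z0L(3) v by (auto simp: Nverts_def PiE_iff)
      ultimately show ?thesis using \<alpha>(2) by blast
    qed
    then show "\<exists>T. openin (Ninf X \<A>) T \<and> z0 \<in> T \<and> T \<subseteq> {z \<in> topspace (Ninf X \<A>). piX X \<A> z \<in> U}"
      using openin_Ninf_carrier_star[OF z0N L] z0N by (intro exI[of _ ?T]) auto
  qed
qed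

lemma p_inf_in_Ninf_set:
  assumes "x \<in> topspace X"
  shows "p_inf X \<A> \<phi> x \<in> Ninf_set X \<A>"
  unfolding Ninf_set_def p_inf_def
  using p_lam_in_cplx_points[OF _ _ assms] proj_p_lam[OF _ _ _ assms]
  by (auto simp: PiE_iff Lambda_def)

lemma piX_p_inf:
  assumes "x \<in> topspace X"
  shows "piX X \<A> (p_inf X \<A> \<phi> x) = x"
  using p_lam_nonzero_wedge[OF _ _ assms] assms
  by (intro piX_eqI[OF p_inf_in_Ninf_set[OF assms] assms]) (auto simp: p_inf_def wedge_pt_iff Lambda_def)

end


section \<open>Compactness of the fibres and closedness of \<open>\<pi>\<close>\<close>

context complete_cover_family
begin

definition star_vertices :: "'a set set set \<Rightarrow> 'a \<Rightarrow> 'a vert set" where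
  "star_vertices L x = {v \<in> Nverts X L. x \<in> wedge X L v}"

lemma NSimp_star_vertices:
  assumes L: "L \<in> Lambda \<A>" and x: "x \<in> topspace X"
  shows "NSimp X L (star_vertices L x)"
  unfolding NSimp_def
proof (intro conjI)
  have "star_vertices L x \<subseteq> PiE L (\<lambda>\<alpha>. {V\<in>\<alpha>. x \<in> V})"
  proof
    fix v assume "v \<in> star_vertices L x"
    then have "v \<in> PiE L (\<lambda>\<alpha>. \<alpha>)" "\<forall>\<alpha>\<in>L. x \<in> v \<alpha>" by (auto simp: star_vertices_def Nverts_def wedge_iff)
    then show "v \<in> PiE L (\<lambda>\<alpha>. {V\<in>\<alpha>. x \<in> V})" by (simp add: PiE_iff)
  qed
  moreover have "finite (PiE L (\<lambda>\<alpha>. {V\<in>\<alpha>. x \<in> V}))"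
    using L finite_members_containing[OF _ x] by (intro finite_PiE) (auto simp: Lambda_def)
  ultimately show "finite (star_vertices L x)" by (rule finite_subset)
  have LA: "L \<subseteq> \<A>" "finite L" using L by (auto simp: Lambda_def)
  have "{v. p_lam X \<phi> L x v \<noteq> 0} \<subseteq> star_vertices L x"
    using cplx_points_NSimpD(3)[OF p_lam_in_cplx_points[OF LA x]] p_lam_nonzero_wedge[OF LA x]
    by (auto simp: star_vertices_def)
  then show "star_vertices L x \<noteq> {}"
    using cplx_points_NSimpD(2)[OF p_lam_in_cplx_points[OF LA x]] by blast
  show "star_vertices L x \<subseteq> Nverts X L" by (auto simp: star_vertices_def)
  show "topspace X \<inter> \<Inter>(wedge X L ` star_vertices L x) \<noteq> {}"
    using x by (auto simp: star_vertices_def)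
qed

lemma star_vertices_near:
  assumes "v \<in> Nverts X L" "y \<in> wedge X L v" "x \<in> topspace X"
    and "\<And>\<alpha> V. \<alpha> \<in> L \<Longrightarrow> V \<in> \<alpha> \<Longrightarrow> y \<in> V \<Longrightarrow> x \<in> V"
  shows "v \<in> star_vertices L x"
  using assms by (auto simp: star_vertices_def Nverts_def PiE_iff wedge_iff)

lemma coord_carried_at_near:
  assumes z: "z \<in> Ninf_set X \<A>" and L: "L \<in> Lambda \<A>" and x: "x \<in> topspace X"
    and near: "\<And>\<alpha> V. \<alpha> \<in> L \<Longrightarrow> V \<in> \<alpha> \<Longrightarrow> piX X \<A> z \<in> V \<Longrightarrow> x \<in> V"
  shows "carried_at L (z L) x"
  unfolding carried_at_def
proof (intro conjI x allI impI)
  fix v assume v: "z L v \<noteq> 0"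
  have "v \<in> Nverts X L" using cplx_points_NSimpD(3)[OF Ninf_setD(1)[OF z L]] v by blast
  moreover have "piX X \<A> z \<in> wedge X L v"
    using piX_in_wedge_pt(2)[OF z L] v by (auto simp: wedge_pt_iff)
  ultimately have "v \<in> star_vertices L x"
    by (rule star_vertices_near[OF _ _ x]) (rule near)
  then show "v \<in> PiE L (\<lambda>\<alpha>. \<alpha>)" "x \<in> wedge X L v" by (auto simp: star_vertices_def Nverts_def)
qed

lemma coord_in_closed_simplex_star_vertices:
  assumes z: "z \<in> Ninf_set X \<A>" and L: "L \<in> Lambda \<A>"
  shows "z L \<in> closed_simplex (star_vertices L (piX X \<A> z))"
proof (rule cplx_points_in_closed_simplex)
  show "z L \<in> cplx_points (NSimp X L)" by (rule Ninf_setD(1)[OF z L])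
  show "finite (star_vertices L (piX X \<A> z))"
    by (rule nerve.simplex_finite[OF NSimp_star_vertices[OF L piX_in_wedge_pt(1)[OF z]]])
  show "{v. z L v \<noteq> 0} \<subseteq> star_vertices L (piX X \<A> z)"
    using cplx_points_NSimpD(3)[OF Ninf_setD(1)[OF z L]] piX_in_wedge_pt(2)[OF z L]
    by (auto simp: star_vertices_def wedge_pt_iff)
qed

lemma compactin_fibre:
  assumes x: "x \<in> topspace X"
  shows "compactin (Ninf X \<A>) {z \<in> topspace (Ninf X \<A>). piX X \<A> z = x}"
proof -
  let ?P = "product_topology (Ncplx X) (Lambda \<A>)"
  let ?K = "PiE (Lambda \<A>) (\<lambda>L. closed_simplex (star_vertices L x))"
  have "compactin ?P ?K"
    using nerve.compactin_weak_cplx_topology_closed_simplex[OF NSimp_star_vertices[OF _ x]]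
    by (subst compactin_PiE) (auto simp: Ncplx_def)
  then have "compactin ?P (Ninf_set X \<A> \<inter> ?K)" by (rule closed_Int_compactin[OF closedin_Ninf_set])
  then have "compactin (Ninf X \<A>) (Ninf_set X \<A> \<inter> ?K)"
    by (simp add: Ninf_def compactin_subtopology)
  moreover have "{z \<in> topspace (Ninf X \<A>). piX X \<A> z = x} \<subseteq> Ninf_set X \<A> \<inter> ?K"
  proof
    fix z assume "z \<in> {z \<in> topspace (Ninf X \<A>). piX X \<A> z = x}"
    then have z: "z \<in> Ninf_set X \<A>" "piX X \<A> z = x" by auto
    then show "z \<in> Ninf_set X \<A> \<inter> ?K"
      using coord_in_closed_simplex_star_vertices[OF z(1)] Ninf_setD(3)[OF z(1)] by (auto simp: PiE_iff)
  qed
  moreover have "closedin X {x}"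
    using Hausdorff_imp_t1_space[OF Hausdorff] x by (simp add: t1_space_closedin_singleton)
  then have "closedin (Ninf X \<A>) {z \<in> topspace (Ninf X \<A>). piX X \<A> z \<in> {x}}"
    by (rule closedin_continuous_map_preimage[OF continuous_map_piX])
  ultimately show ?thesis by (auto intro: closed_compactin)
qed

lemma fibre_point_with_coord:
  assumes L0: "L0 \<in> Lambda \<A>" and a: "a \<in> cplx_points (NSimp X L0)" "carried_at L0 a x"
  obtains s where "s \<in> Ninf_set X \<A>" "s L0 = a" "piX X \<A> s = x"
proof -
  note a_pt = cplx_points_NSimpD[OF a(1)]
  have x: "x \<in> topspace X" using a(2) by (simp add: carried_at_def)
  define s where "s = restrict (\<lambda>N. proj_pt N (extend_pt L0 a x (N \<union> L0))) (Lambda \<A>)"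
  have NL0: "N \<union> L0 \<subseteq> \<A>" "finite (N \<union> L0)" if "N \<in> Lambda \<A>" for N
    using that L0 by (auto simp: Lambda_def)
  have ext: "extend_pt L0 a x (N \<union> L0) \<in> cplx_points (NSimp X (N \<union> L0))" if "N \<in> Lambda \<A>" for N
    using extend_pt_in_cplx_points[OF NL0[OF that] _ a(2) a_pt(4,1,5)] by blast
  have compat: "proj_pt N (s M) = s N" if N: "N \<in> Lambda \<A>" and M: "M \<in> Lambda \<A>" and NM: "N \<subseteq> M" for N M
  proof -
    have "proj_pt N (s M) = proj_pt N (extend_pt L0 a x (M \<union> L0))"
      using M NM proj_pt_proj_pt[OF _ cplx_points_NSimpD(1)[OF ext[OF M]]] by (simp add: s_def)
    also have "\<dots> = s N" using N proj_extend_pt_union[OF NL0[OF M] NM a(2)] by (simp add: s_def)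
    finally show ?thesis .
  qed
  have s: "s \<in> Ninf_set X \<A>"
    unfolding Ninf_set_def using proj_pt_in_cplx_points[OF ext] compat by (auto simp: s_def PiE_iff)
  moreover have "s L0 = a"
  proof -
    have "s L0 = proj_pt L0 (extend_pt L0 a x L0)" using L0 by (simp add: s_def)
    also have "\<dots> = a" unfolding extend_pt_self[OF a(2)]
      using a(2) by (intro proj_pt_extensional) (auto simp: carried_at_def PiE_iff)
    finally show ?thesis .
  qed
  moreover have "piX X \<A> s = x"
    using wedge_pt_proj_extend_pt[OF NL0 a(2)] by (intro piX_eqI[OF s x]) (simp add: s_def)
  ultimately show thesis by (rule that)
qed

text \<open>By compactness a neighbourhood of the fibre over \<open>y\<close> depends on one coordinate \<open>L0\<close> only. Over a point
  near \<open>y\<close>, local finiteness makes the \<open>L0\<close>-coordinate carried at \<open>y\<close>, so it is also the \<open>L0\<close>-coordinate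
  of a point of the fibre.\<close>
lemma closed_map_piX: "closed_map (Ninf X \<A>) X (piX X \<A>)"
  unfolding closed_map_fibre_neighbourhood
proof (intro conjI allI impI)
  show "piX X \<A> \<in> topspace (Ninf X \<A>) \<rightarrow> topspace X" using piX_in_wedge_pt(1) by auto
  fix U y
  assume "openin (Ninf X \<A>) U \<and> y \<in> topspace X \<and> {z \<in> topspace (Ninf X \<A>). piX X \<A> z = y} \<subseteq> U"
  then have U: "openin (Ninf X \<A>) U" and y: "y \<in> topspace X"
    and FU: "{z \<in> topspace (Ninf X \<A>). piX X \<A> z = y} \<subseteq> U" by auto
  let ?P = "product_topology (Ncplx X) (Lambda \<A>)"
  let ?F = "{z \<in> topspace (Ninf X \<A>). piX X \<A> z = y}"
  obtain U' where U': "openin ?P U'" "U = U' \<inter> Ninf_set X \<A>"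
    using U unfolding Ninf_def openin_subtopology by blast
  have "compactin ?P ?F" using compactin_fibre[OF y] by (simp add: Ninf_def compactin_subtopology)
  moreover have "?F \<subseteq> U'" using FU U'(2) by blast
  ultimately obtain J where J: "finite J" "J \<subseteq> Lambda \<A>"
    and JU': "\<And>z s. z \<in> topspace ?P \<Longrightarrow> s \<in> ?F \<Longrightarrow> \<forall>L\<in>J. z L = s L \<Longrightarrow> z \<in> U'"
    by (rule compactin_product_nbhd_finite_coordinates[OF _ U'(1)]) (rule that)
  define L0 where "L0 = \<Union>J"
  have L0: "L0 \<in> Lambda \<A>" "finite L0" "L0 \<subseteq> \<A>" using J by (auto simp: Lambda_def L0_def)
  obtain W where W: "openin X W" "y \<in> W"
    "\<And>y' \<alpha> V. y' \<in> W \<Longrightarrow> \<alpha> \<in> L0 \<Longrightarrow> V \<in> \<alpha> \<Longrightarrow> y' \<in> V \<Longrightarrow> y \<in> V"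
    by (rule nbhd_members_contain_point_finite[OF L0(2,3) y]) (rule that)
  have "z \<in> U" if z: "z \<in> Ninf_set X \<A>" "piX X \<A> z \<in> W" for z
  proof -
    have "carried_at L0 (z L0) y"
      by (rule coord_carried_at_near[OF z(1) L0(1) y]) (rule W(3)[OF z(2)])
    then obtain s where s: "s \<in> Ninf_set X \<A>" "s L0 = z L0" "piX X \<A> s = y"
      by (rule fibre_point_with_coord[OF L0(1) Ninf_setD(1)[OF z(1) L0(1)]]) (rule that)
    have "z L = s L" if "L \<in> J" for L
    proof -
      have L: "L \<in> Lambda \<A>" "L \<subseteq> L0" using that J(2) by (auto simp: L0_def)
      have "z L = proj_pt L (z L0)" using Ninf_setD(2)[OF z(1) L(1) L0(1) L(2)] by simp
      also have "\<dots> = s L" using Ninf_setD(2)[OF s(1) L(1) L0(1) L(2)] s(2) by simp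
      finally show ?thesis .
    qed
    moreover have "z \<in> topspace ?P" "s \<in> ?F" using z(1) s by (auto simp: Ninf_set_def)
    ultimately have "z \<in> U'" using JU' by blast
    then show ?thesis using U'(2) z(1) by blast
  qed
  then show "\<exists>V. openin X V \<and> y \<in> V \<and> {z \<in> topspace (Ninf X \<A>). piX X \<A> z \<in> V} \<subseteq> U"
    using W(1,2) by (intro exI[of _ W]) auto
qed

end


section \<open>The straight-line homotopy from the identity to \<open>p \<circ> \<pi>\<close>\<close>

context complete_cover_family
begin

definition homotopy_coord :: "'a set set set \<Rightarrow> ('a set set set \<Rightarrow> 'a pt) \<times> real \<Rightarrow> 'a pt" where
  "homotopy_coord L = (\<lambda>(z, t) v. (1 - t) * z L v + t * p_lam X \<phi> L (piX X \<A> z) v)"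

definition nerve_homotopy :: "('a set set set \<Rightarrow> 'a pt) \<times> real \<Rightarrow> ('a set set set \<Rightarrow> 'a pt)" where
  "nerve_homotopy p = restrict (\<lambda>L. homotopy_coord L p) (Lambda \<A>)"

lemma homotopy_coord_nonzero:
  assumes z: "z \<in> Ninf_set X \<A>" and L: "L \<in> Lambda \<A>" and v: "homotopy_coord L (z, t) v \<noteq> 0"
  shows "v \<in> Nverts X L" "piX X \<A> z \<in> wedge X L v"
proof -
  have LA: "L \<subseteq> \<A>" "finite L" using L by (auto simp: Lambda_def)
  note x = piX_in_wedge_pt[OF z]
  have "v \<in> Nverts X L \<and> piX X \<A> z \<in> wedge X L v"
  proof (cases "z L v = 0")
    case True
    then have "p_lam X \<phi> L (piX X \<A> z) v \<noteq> 0" using v by (auto simp: homotopy_coord_def)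
    then show ?thesis
      using p_lam_nonzero_wedge[OF LA x(1)] cplx_points_NSimpD(3)[OF p_lam_in_cplx_points[OF LA x(1)]] by blast
  next
    case False
    then show ?thesis
      using x(2)[OF L] cplx_points_NSimpD(3)[OF Ninf_setD(1)[OF z L]] by (auto simp: wedge_pt_iff)
  qed
  then show "v \<in> Nverts X L" "piX X \<A> z \<in> wedge X L v" by auto
qed

lemma nerve_homotopy_in_fibre:
  assumes z: "z \<in> Ninf_set X \<A>" and t: "0 \<le> t" "t \<le> 1"
  shows "nerve_homotopy (z, t) \<in> Ninf_set X \<A>" "piX X \<A> (nerve_homotopy (z, t)) = piX X \<A> z"
proof -
  let ?x = "piX X \<A> z"
  note x = piX_in_wedge_pt[OF z]
  have LA: "L \<subseteq> \<A>" "finite L" if "L \<in> Lambda \<A>" for L using that by (auto simp: Lambda_def)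
  have coord: "homotopy_coord L (z, t) \<in> cplx_points (NSimp X L)" if L: "L \<in> Lambda \<A>" for L
    unfolding homotopy_coord_def
    using convex_comb_in_cplx_points[OF Ninf_setD(1)[OF z L] p_lam_in_cplx_points[OF LA[OF L] x(1)] t x(1)]
      x(2)[OF L] p_lam_nonzero_wedge[OF LA[OF L] x(1)] by (auto simp: wedge_pt_iff)
  have compat: "proj_pt L (homotopy_coord M (z, t)) = homotopy_coord L (z, t)"
    if L: "L \<in> Lambda \<A>" and M: "M \<in> Lambda \<A>" and LM: "L \<subseteq> M" for L M
  proof
    fix w
    have "finite {v. z M v \<noteq> 0}" "finite {v. p_lam X \<phi> M ?x v \<noteq> 0}"
      using cplx_points_NSimpD(1)[OF Ninf_setD(1)[OF z M]]
        cplx_points_NSimpD(1)[OF p_lam_in_cplx_points[OF LA[OF M] x(1)]] by auto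
    from proj_pt_convex_comb[OF this, of L "1 - t" t w]
    show "proj_pt L (homotopy_coord M (z, t)) w = homotopy_coord L (z, t) w"
      using Ninf_setD(2)[OF z L M LM] proj_p_lam[OF LA[OF M] LM x(1)]
      by (simp add: homotopy_coord_def)
  qed
  show H: "nerve_homotopy (z, t) \<in> Ninf_set X \<A>"
    unfolding Ninf_set_def nerve_homotopy_def using coord compat by (auto simp: PiE_iff)
  show "piX X \<A> (nerve_homotopy (z, t)) = ?x"
    using homotopy_coord_nonzero(2)[OF z] x(1)
    by (intro piX_eqI[OF H x(1)]) (auto simp: nerve_homotopy_def wedge_pt_iff)
qed

lemma nerve_homotopy_0: "z \<in> Ninf_set X \<A> \<Longrightarrow> nerve_homotopy (z, 0) = z"
  using Ninf_setD(3)[of z X \<A>]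
  by (auto simp: nerve_homotopy_def homotopy_coord_def fun_eq_iff restrict_def extensional_def)

lemma nerve_homotopy_1: "nerve_homotopy (z, 1) = p_inf X \<A> \<phi> (piX X \<A> z)"
  by (simp add: nerve_homotopy_def homotopy_coord_def p_inf_def)

lemma continuous_map_homotopy_coord_powertop:
  assumes L: "L \<in> Lambda \<A>"
  shows "continuous_map (prod_topology (Ninf X \<A>) (top_of_set {0..1::real})) (powertop_real UNIV)
    (homotopy_coord L)"
  unfolding continuous_map_componentwise_UNIV
proof
  fix v
  let ?T = "prod_topology (Ninf X \<A>) (top_of_set {0..1::real})"
  have "continuous_map ?T (Ncplx X L) (\<lambda>p. fst p L)"
    using continuous_map_compose[OF continuous_map_fst continuous_map_Ninf_coord[OF L]] by (simp add: o_def)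
  then have "continuous_map ?T (powertop_real UNIV) (\<lambda>p. fst p L)"
    using continuous_map_compose[OF _ continuous_map_Ncplx_id] by (simp add: o_def)
  then have z: "continuous_map ?T euclideanreal (\<lambda>p. fst p L v)"
    using continuous_map_compose[OF _ continuous_map_product_projection[of v UNIV "\<lambda>_. euclideanreal"]]
    by (simp add: o_def)
  have x: "continuous_map ?T X (\<lambda>p. piX X \<A> (fst p))"
    using continuous_map_compose[OF continuous_map_fst continuous_map_piX] by (simp add: o_def)
  have "continuous_map ?T euclideanreal (\<lambda>p. p_lam X \<phi> L (piX X \<A> (fst p)) v)"
  proof (cases "v \<in> Nverts X L")
    case True
    then have "continuous_map X euclideanreal (\<phi> \<alpha> (v \<alpha>))" if "\<alpha> \<in> L" for \<alpha>
      using that L continuous_map_phi by (auto simp: Nverts_def PiE_iff Lambda_def)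
    then show ?thesis using True L continuous_map_compose[OF x]
      by (auto simp: p_lam_def o_def Lambda_def intro!: continuous_map_prod)
  qed (simp add: p_lam_def)
  moreover have "continuous_map ?T euclideanreal snd"
    by (rule continuous_map_into_fulltopology[OF continuous_map_snd])
  ultimately show "continuous_map ?T euclideanreal (\<lambda>p. homotopy_coord L p v)"
    using z unfolding homotopy_coord_def case_prod_beta
    by (intro continuous_map_add continuous_map_real_mult continuous_map_diff) auto
qed

lemma homotopy_coord_in_star_simplex:
  assumes z: "z \<in> Ninf_set X \<A>" "0 \<le> t" "t \<le> 1" and L: "L \<in> Lambda \<A>" and x: "x \<in> topspace X"
    and near: "\<And>\<alpha> V. \<alpha> \<in> L \<Longrightarrow> V \<in> \<alpha> \<Longrightarrow> piX X \<A> z \<in> V \<Longrightarrow> x \<in> V"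
  shows "homotopy_coord L (z, t) \<in> closed_simplex (star_vertices L x)"
proof (rule cplx_points_in_closed_simplex)
  show "homotopy_coord L (z, t) \<in> cplx_points (NSimp X L)"
    using Ninf_setD(1)[OF nerve_homotopy_in_fibre(1)[OF z] L] L by (simp add: nerve_homotopy_def)
  show "finite (star_vertices L x)" by (rule nerve.simplex_finite[OF NSimp_star_vertices[OF L x]])
  show "{v. homotopy_coord L (z, t) v \<noteq> 0} \<subseteq> star_vertices L x"
  proof
    fix v assume "v \<in> {v. homotopy_coord L (z, t) v \<noteq> 0}"
    then have "v \<in> Nverts X L" "piX X \<A> z \<in> wedge X L v" using homotopy_coord_nonzero[OF z(1) L] by auto
    then show "v \<in> star_vertices L x" by (rule star_vertices_near[OF _ _ x]) (rule near)
  qed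
qed

text \<open>Near a point \<open>(z\<^sub>0, t\<^sub>0)\<close> all coordinates \<open>homotopy_coord L (z, t)\<close> lie in the single closed simplex
  spanned by \<open>star_vertices L (\<pi> z\<^sub>0)\<close>, where the weak topology agrees with the product topology.\<close>
lemma continuous_map_homotopy_coord:
  assumes L: "L \<in> Lambda \<A>"
  shows "continuous_map (prod_topology (Ninf X \<A>) (top_of_set {0..1::real})) (Ncplx X L) (homotopy_coord L)"
proof -
  let ?T = "prod_topology (Ninf X \<A>) (top_of_set {0..1::real})"
  have "\<forall>x\<in>topspace X. \<exists>W. openin X W \<and> x \<in> W \<and> (\<forall>y \<alpha> V. y \<in> W \<longrightarrow> \<alpha> \<in> L \<longrightarrow> V \<in> \<alpha> \<longrightarrow> y \<in> V \<longrightarrow> x \<in> V)"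
    using L nbhd_members_contain_point_finite[of L] by (simp add: Lambda_def) metis
  then obtain W where W: "\<And>x. x \<in> topspace X \<Longrightarrow> openin X (W x)" "\<And>x. x \<in> topspace X \<Longrightarrow> x \<in> W x"
    "\<And>x y \<alpha> V. x \<in> topspace X \<Longrightarrow> y \<in> W x \<Longrightarrow> \<alpha> \<in> L \<Longrightarrow> V \<in> \<alpha> \<Longrightarrow> y \<in> V \<Longrightarrow> x \<in> V"
    by metis
  define Q where "Q p0 = {z \<in> topspace (Ninf X \<A>). piX X \<A> z \<in> W (piX X \<A> (fst p0))} \<times> {0..1::real}"
    for p0 :: "('a set set set \<Rightarrow> 'a pt) \<times> real"
  show ?thesis
  proof (rule pasting_lemma[where I="topspace ?T" and T=Q and X="?T" and f="\<lambda>_. homotopy_coord L"])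
    fix p0 assume p0: "p0 \<in> topspace ?T"
    let ?x0 = "piX X \<A> (fst p0)"
    have x0: "?x0 \<in> topspace X" using p0 piX_in_wedge_pt(1) by auto
    show "openin ?T (Q p0)"
      unfolding Q_def using openin_continuous_map_preimage[OF continuous_map_piX W(1)[OF x0]]
      by (simp add: openin_prod_Times_iff)
    show "continuous_map (subtopology ?T (Q p0)) (Ncplx X L) (homotopy_coord L)"
      unfolding Ncplx_def
    proof (rule nerve.continuous_map_into_weak_cplx_topology[OF NSimp_star_vertices[OF L x0]])
      show "continuous_map (subtopology ?T (Q p0)) (powertop_real UNIV) (homotopy_coord L)"
        by (rule continuous_map_from_subtopology[OF continuous_map_homotopy_coord_powertop[OF L]])
      fix p assume "p \<in> topspace (subtopology ?T (Q p0))"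
      then obtain z t where p: "p = (z, t)" "z \<in> Ninf_set X \<A>" "0 \<le> t" "t \<le> 1" "piX X \<A> z \<in> W ?x0"
        by (auto simp: Q_def)
      have "homotopy_coord L (z, t) \<in> closed_simplex (star_vertices L ?x0)"
        by (rule homotopy_coord_in_star_simplex[OF p(2-4) L x0]) (rule W(3)[OF x0 p(5)])
      then show "homotopy_coord L p \<in> closed_simplex (star_vertices L ?x0)" using p(1) by simp
    qed
  next
    fix p assume "p \<in> topspace ?T"
    then show "\<exists>p0. p0 \<in> topspace ?T \<and> p \<in> Q p0 \<and> homotopy_coord L p = homotopy_coord L p"
      using W(2) piX_in_wedge_pt(1) by (intro exI[of _ p]) (auto simp: Q_def)
  qed auto
qed

lemma continuous_map_nerve_homotopy:
  "continuous_map (prod_topology (Ninf X \<A>) (top_of_set {0..1::real})) (Ninf X \<A>) nerve_homotopy"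
proof -
  let ?T = "prod_topology (Ninf X \<A>) (top_of_set {0..1::real})"
  have "continuous_map ?T (product_topology (Ncplx X) (Lambda \<A>)) nerve_homotopy"
    using continuous_map_homotopy_coord
    by (auto simp: continuous_map_componentwise nerve_homotopy_def)
  moreover have "nerve_homotopy \<in> topspace ?T \<rightarrow> Ninf_set X \<A>"
    using nerve_homotopy_in_fibre(1) by auto
  ultimately have "continuous_map ?T (subtopology (product_topology (Ncplx X) (Lambda \<A>)) (Ninf_set X \<A>))
      nerve_homotopy"
    by (simp only: continuous_map_in_subtopology)
  then show ?thesis by (simp only: Ninf_def[symmetric])
qed

lemma contractible_fibre:
  assumes x: "x \<in> topspace X"
  shows "contractible_space (subtopology (Ninf X \<A>) {z \<in> topspace (Ninf X \<A>). piX X \<A> z = x})"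
proof -
  let ?F = "{z \<in> topspace (Ninf X \<A>). piX X \<A> z = x}"
  let ?S = "subtopology (Ninf X \<A>) ?F"
  let ?I = "top_of_set {0..1::real}"
  let ?h = "\<lambda>p. nerve_homotopy (snd p, fst p)"
  have "continuous_map (prod_topology ?I ?S) (prod_topology (Ninf X \<A>) ?I) (\<lambda>p. (snd p, fst p))"
    by (intro continuous_map_pairedI continuous_map_fst continuous_map_into_fulltopology[OF continuous_map_snd])
  from continuous_map_compose[OF this continuous_map_nerve_homotopy]
  have "continuous_map (prod_topology ?I ?S) (Ninf X \<A>) ?h" by (simp add: o_def)
  moreover have "?h \<in> topspace (prod_topology ?I ?S) \<rightarrow> ?F"
    using nerve_homotopy_in_fibre by auto
  ultimately have "continuous_map (prod_topology ?I ?S) ?S ?h"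
    by (simp add: continuous_map_in_subtopology)
  moreover have "?h (0, z) = id z" "?h (1, z) = p_inf X \<A> \<phi> x" if "z \<in> topspace ?S" for z
    using that nerve_homotopy_0 nerve_homotopy_1 by auto
  ultimately have "homotopic_with (\<lambda>_. True) ?S ?S id (\<lambda>_. p_inf X \<A> \<phi> x)"
    by (subst homotopic_with) (auto intro!: exI[where x="?h"])
  then show ?thesis unfolding contractible_space_def by blast
qed

end

theorem theorem2p5:
  fixes X :: "'a topology"
    and \<A> :: "'a set set set"
    and \<phi> :: "'a set set \<Rightarrow> 'a set \<Rightarrow> 'a \<Rightarrow> real"
  assumes complete: "topologically_complete X"
    and covers: "\<forall>\<alpha>\<in>\<A>. normal_cover X \<alpha> (\<phi> \<alpha>)"
    and condI: "\<forall>U x. openin X U \<and> x \<in> U \<longrightarrow> (\<exists>\<alpha>\<in>\<A>. \<Union>{V\<in>\<alpha>. x \<in> V} \<subseteq> U)"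
    and condII: "\<forall>f. (\<forall>\<alpha>\<in>\<A>. f \<alpha> \<in> \<alpha>) \<and>
                    (\<forall>L. finite L \<and> L \<noteq> {} \<and> L \<subseteq> \<A> \<longrightarrow> \<Inter>(f ` L) \<noteq> {})
                  \<longrightarrow> \<Inter>(f ` \<A>) \<noteq> {}"
  shows "(continuous_map (Ninf X \<A>) X (piX X \<A>) \<and> proper_map (Ninf X \<A>) X (piX X \<A>))
    \<and> (\<forall>x\<in>topspace X. piX X \<A> (p_inf X \<A> \<phi> x) = x)
    \<and> (\<exists>H. continuous_map (prod_topology (Ninf X \<A>) (top_of_set {0..1::real})) (Ninf X \<A>) H \<and>
             (\<forall>z\<in>topspace (Ninf X \<A>). H (z, 0) = z \<and> H (z, 1) = p_inf X \<A> \<phi> (piX X \<A> z)) \<and>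
             (\<forall>z\<in>topspace (Ninf X \<A>). \<forall>t\<in>{0..1}. piX X \<A> (H (z, t)) = piX X \<A> z))
    \<and> (\<forall>x\<in>topspace X. contractible_space
           (subtopology (Ninf X \<A>) {z \<in> topspace (Ninf X \<A>). piX X \<A> z = x}))"
proof -
  have "Hausdorff_space X"
    using complete unfolding topologically_complete_def tychonoff_space_def
    by (meson completely_regular_imp_regular_space regular_t1_imp_Hausdorff_space)
  then interpret complete_cover_family X \<A> \<phi>
    using covers condI condII by unfold_locales
  have "proper_map (Ninf X \<A>) X (piX X \<A>)"
    unfolding proper_map_def using closed_map_piX compactin_fibre by blast
  moreover have "\<exists>H. continuous_map (prod_topology (Ninf X \<A>) (top_of_set {0..1::real})) (Ninf X \<A>) H \<and>
             (\<forall>z\<in>topspace (Ninf X \<A>). H (z, 0) = z \<and> H (z, 1) = p_inf X \<A> \<phi> (piX X \<A> z)) \<and>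
             (\<forall>z\<in>topspace (Ninf X \<A>). \<forall>t\<in>{0..1}. piX X \<A> (H (z, t)) = piX X \<A> z)"
    using continuous_map_nerve_homotopy nerve_homotopy_0 nerve_homotopy_1 nerve_homotopy_in_fibre(2)
    by (intro exI[of _ nerve_homotopy]) auto
  ultimately show ?thesis
    using continuous_map_piX piX_p_inf contractible_fibre by blast
qed

end
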